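(* Let $(X_1,\dots,X_n)$ be a centered Gaussian vector and assume that for some $r<1$, $$\sum_{j=1,\,j\ne i}^n|\mathbb{E}X_iX_j|\le r\,\mathbb{E}X_i^2,\qquad i=1,\dots,n.$$ Then for every $z>0$, $$\mathbb{P}\Big\{\sup_{j=1}^n|X_j|\le z\Big\}\le\prod_{j=1}^n\mathbb{P}\Big\{|X_j|\le\frac{z}{\sqrt{1-r}}\Big\}.$$ *)

theory Defs
  imports "HOL-Probability.Probability"
begin

text \<open>A real random variable is centered Gaussian if it is either almost surely zero
  (degenerate Gaussian of variance 0) or has density of N(0, sigma^2) for some sigma > 0.\<close>
definition centered_gaussian_rv :: "'a measure \<Rightarrow> ('a \<Rightarrow> real) \<Rightarrow> bool" where
  "centered_gaussian_rv M Y \<longleftrightarrow>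
     Y \<in> borel_measurable M \<and>
     ((AE \<omega> in M. Y \<omega> = 0) \<or> (\<exists>\<sigma>>0. distributed M lborel Y (normal_density 0 \<sigma>)))"

definition centered_gaussian_vector :: "'a measure \<Rightarrow> nat \<Rightarrow> (nat \<Rightarrow> 'a \<Rightarrow> real) \<Rightarrow> bool" where
  "centered_gaussian_vector M n X \<longleftrightarrow>
     (\<forall>i<n. X i \<in> borel_measurable M) \<and>
     (\<forall>c :: nat \<Rightarrow> real. centered_gaussian_rv M (\<lambda>\<omega>. \<Sum>i<n. c i * X i \<omega>))"

end

theory Submission
  imports Defs
begin

text \<open>
  Let \<open>C\<close> be the covariance of the centred Gaussian vector \<open>X\<close> and assume
  \<open>\<Sum>\<^sub>j\<^sub>\<noteq>\<^sub>i \<bar>C i j\<bar> \<le> r C i i\<close> with \<open>r < 1\<close>.  Then \<open>C\<close> splits as \<open>(1 - r) diag C\<close> plus a sum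
  of rank-one positive semidefinite matrices \<open>v v\<^sup>T\<close>.  Hence \<open>X\<close> has the same law as a model
  vector \<open>U m = sqrt ((1 - r) C m m) g m + W m\<close>, where the \<open>g m\<close> are independent standard normals
  independent of the Gaussian vector \<open>W\<close>.  Conditionally on \<open>W\<close> the event
  \<open>\<forall>m. \<bar>U m\<bar> \<le> z\<close> is a product of interval events for shifted Gaussians, and by the
  one-dimensional Anderson inequality a shift only decreases the probability of a symmetric
  interval; this gives the product bound with the variances shrunk by the factor \<open>1 - r\<close>.

  Since the library has no uniqueness theorem for multivariate characteristic functions, the
  transfer from \<open>U\<close> back to \<open>X\<close> is proved directly: equal characteristic functions give equal
  expectations of all trigonometric polynomials in \<open>n\<close> variables, and a continuous cut-off
  function of a box, built from \<open>cos\<close> and uniformly approximated via Stone-Weierstrass, then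
  compares box probabilities up to an arbitrarily small enlargement of the box.
\<close>

section \<open>Trigonometric polynomials in finitely many variables\<close>

text \<open>It is closed under
  products, and expectations of its members are determined by the characteristic function.\<close>

inductive_set trig_poly :: "nat \<Rightarrow> ((nat \<Rightarrow> real) \<Rightarrow> complex) set" for n :: nat where
  character: "(\<lambda>x. iexp (\<Sum>j<n. t j * x j)) \<in> trig_poly n"
| scale: "F \<in> trig_poly n \<Longrightarrow> (\<lambda>x. c * F x) \<in> trig_poly n"
| add: "F \<in> trig_poly n \<Longrightarrow> G \<in> trig_poly n \<Longrightarrow> (\<lambda>x. F x + G x) \<in> trig_poly n"

lemma iexp_sum_mult:
  "iexp (\<Sum>j<n. s j * x j) * iexp (\<Sum>j<n. t j * x j) = iexp (\<Sum>j<n. (s j + t j) * x j)"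
  by (simp add: exp_add[symmetric] distrib_left distrib_right sum.distrib)

lemma trig_poly_const: "(\<lambda>x. c) \<in> trig_poly n"
  using trig_poly.scale[OF trig_poly.character[where t = "\<lambda>_. 0"], where c = c] by simp

lemma trig_poly_mult_character:
  assumes "G \<in> trig_poly n"
  shows "(\<lambda>x. iexp (\<Sum>j<n. s j * x j) * G x) \<in> trig_poly n"
  using assms
proof induction
  case (character t)
  show ?case
    unfolding iexp_sum_mult by (rule trig_poly.character)
next
  case (scale F c)
  then show ?case
    using trig_poly.scale[OF scale.IH, of c] by (simp add: ac_simps)
next
  case (add F G)
  then show ?case
    using trig_poly.add[OF add.IH] by (simp add: distrib_left)
qed

lemma trig_poly_mult:
  assumes "F \<in> trig_poly n" and "G \<in> trig_poly n"
  shows "(\<lambda>x. F x * G x) \<in> trig_poly n"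
  using assms(1)
proof induction
  case (character t)
  show ?case by (rule trig_poly_mult_character[OF assms(2)])
next
  case (scale F c)
  then show ?case
    using trig_poly.scale[OF scale.IH, of c] by (simp add: ac_simps)
next
  case (add F1 F2)
  then show ?case
    using trig_poly.add[OF add.IH] by (simp add: distrib_right)
qed

lemma trig_poly_prod:
  assumes "finite J" and "\<And>j. j \<in> J \<Longrightarrow> F j \<in> trig_poly n"
  shows "(\<lambda>x. \<Prod>j\<in>J. F j x) \<in> trig_poly n"
  using assms
proof (induction J rule: finite_induct)
  case empty
  show ?case using trig_poly_const[of 1] by simp
next
  case (insert j J)
  then show ?case
    using trig_poly_mult[of "F j" n "\<lambda>x. \<Prod>j\<in>J. F j x"] by simp
qed

lemma sum_single_coordinate:
  fixes x :: "nat \<Rightarrow> real"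
  assumes "k < n"
  shows "(\<Sum>j<n. (if j = k then a else 0) * x j) = a * x k"
proof -
  have "(\<Sum>j<n. (if j = k then a else 0) * x j) = (\<Sum>j<n. if j = k then a * x k else 0)"
    by (rule sum.cong) auto
  then show ?thesis using assms by simp
qed

text \<open>\<open>cos (w x\<^sub>k) = (exp (i w x\<^sub>k) + exp (- i w x\<^sub>k)) / 2\<close> is a trigonometric polynomial.\<close>

lemma trig_poly_cos_coordinate:
  assumes "k < n"
  shows "(\<lambda>x. complex_of_real (cos (w * x k))) \<in> trig_poly n"
proof -
  let ?e = "\<lambda>a x. iexp (\<Sum>j<n. (if j = k then a else 0) * x j)"
  have "(\<lambda>x. (1/2) * ?e w x + (1/2) * ?e (- w) x) \<in> trig_poly n"
    by (intro trig_poly.add trig_poly.scale trig_poly.character)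
  moreover have "complex_of_real (cos (w * x k)) = (1/2) * ?e w x + (1/2) * ?e (- w) x" for x
    unfolding sum_single_coordinate[OF assms] cos_of_real[symmetric]
    by (simp add: cos_exp_eq field_simps)
  ultimately show ?thesis by simp
qed

lemma trig_poly_poly_cos_coordinate:
  assumes "real_polynomial_function p" and "k < n"
  shows "(\<lambda>x. complex_of_real (p (cos (w * x k)))) \<in> trig_poly n"
  using assms(1)
proof induction
  case (linear f)
  then obtain c where "f = (\<lambda>y. y * c)" using real_bounded_linear by blast
  then show ?case
    using trig_poly.scale[OF trig_poly_cos_coordinate[OF assms(2)], of "complex_of_real c" w]
    by (simp add: mult.commute)
next
  case (const c)
  show ?case using trig_poly_const[of "complex_of_real c"] by simp
next
  case (add f g)
  then show ?case using trig_poly.add[OF add.IH] by simp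
next
  case (mult f g)
  then show ?case using trig_poly_mult[OF mult.IH] by simp
qed

lemma (in prob_space) trig_poly_integrable:
  assumes "F \<in> trig_poly n" and [measurable]: "\<And>j. Y j \<in> borel_measurable M"
  shows "integrable M (\<lambda>\<omega>. F (\<lambda>j. Y j \<omega>))"
  using assms(1)
proof induction
  case (character t)
  show ?case by (rule integrable_iexp) auto
qed auto

lemma (in prob_space) integrable_prod_bounded:
  fixes h :: "real \<Rightarrow> real" and n :: nat
  assumes [measurable]: "h \<in> borel_measurable borel" "\<And>j. Y j \<in> borel_measurable M"
    and bound: "\<And>x. \<bar>h x\<bar> \<le> B"
  shows "integrable M (\<lambda>\<omega>. \<Prod>j<n. h (Y j \<omega>))"
proof (rule integrable_const_bound[where B = "B ^ n"])
  show "AE \<omega> in M. norm (\<Prod>j<n. h (Y j \<omega>)) \<le> B ^ n"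
  proof (rule AE_I2)
    fix \<omega>
    have "(\<Prod>j<n. \<bar>h (Y j \<omega>)\<bar>) \<le> (\<Prod>j<n. B)"
      by (rule prod_mono) (use bound in auto)
    then show "norm (\<Prod>j<n. h (Y j \<omega>)) \<le> B ^ n"
      by (simp add: abs_prod)
  qed
qed measurable

lemma (in prob_space) integral_le_plus_const:
  fixes f g :: "'a \<Rightarrow> real"
  assumes "integrable M f" "integrable M g" "\<And>\<omega>. \<omega> \<in> space M \<Longrightarrow> f \<omega> \<le> g \<omega> + C"
  shows "(\<integral>\<omega>. f \<omega> \<partial>M) \<le> (\<integral>\<omega>. g \<omega> \<partial>M) + C"
proof -
  have "integrable M (\<lambda>\<omega>. g \<omega> + C)"
    by (intro Bochner_Integration.integrable_add assms(2) integrable_const)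
  then have "(\<integral>\<omega>. f \<omega> \<partial>M) \<le> (\<integral>\<omega>. g \<omega> + C \<partial>M)"
    using assms by (intro Bochner_Integration.integral_mono) auto
  also have "\<dots> = (\<integral>\<omega>. g \<omega> \<partial>M) + C"
    using assms(2) by (simp add: Bochner_Integration.integral_add prob_space)
  finally show ?thesis .
qed

lemma abs_prod_diff_le:
  fixes f g :: "'i \<Rightarrow> real"
  assumes "finite S" "K \<ge> 1" "\<And>i. i \<in> S \<Longrightarrow> \<bar>f i\<bar> \<le> K" "\<And>i. i \<in> S \<Longrightarrow> \<bar>g i\<bar> \<le> K"
  shows "\<bar>(\<Prod>i\<in>S. f i) - (\<Prod>i\<in>S. g i)\<bar> \<le> K ^ card S * (\<Sum>i\<in>S. \<bar>f i - g i\<bar>)"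
  using assms
proof (induction S rule: finite_induct)
  case empty
  then show ?case by simp
next
  case (insert x S)
  have IH: "\<bar>(\<Prod>i\<in>S. f i) - (\<Prod>i\<in>S. g i)\<bar> \<le> K ^ card S * (\<Sum>i\<in>S. \<bar>f i - g i\<bar>)"
    using insert by auto
  have prod_f: "\<bar>\<Prod>i\<in>S. f i\<bar> \<le> K ^ card S"
  proof -
    have "(\<Prod>i\<in>S. \<bar>f i\<bar>) \<le> (\<Prod>i\<in>S. K)" by (rule prod_mono) (use insert in auto)
    then show ?thesis by (simp add: abs_prod)
  qed
  have "(\<Prod>i\<in>insert x S. f i) - (\<Prod>i\<in>insert x S. g i)
      = (f x - g x) * (\<Prod>i\<in>S. f i) + g x * ((\<Prod>i\<in>S. f i) - (\<Prod>i\<in>S. g i))"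
    using insert by (simp add: algebra_simps)
  then have "\<bar>(\<Prod>i\<in>insert x S. f i) - (\<Prod>i\<in>insert x S. g i)\<bar>
      \<le> \<bar>f x - g x\<bar> * \<bar>\<Prod>i\<in>S. f i\<bar> + \<bar>g x\<bar> * \<bar>(\<Prod>i\<in>S. f i) - (\<Prod>i\<in>S. g i)\<bar>"
    by (metis abs_mult abs_triangle_ineq)
  also have "\<dots> \<le> \<bar>f x - g x\<bar> * K ^ card S + K * (K ^ card S * (\<Sum>i\<in>S. \<bar>f i - g i\<bar>))"
    by (intro add_mono mult_mono prod_f IH) (use insert in auto)
  also have "\<dots> \<le> K ^ card (insert x S) * (\<Sum>i\<in>insert x S. \<bar>f i - g i\<bar>)"
  proof -
    have "K ^ card S \<le> K ^ card (insert x S)"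
      using insert by (simp add: power_increasing)
    then have "\<bar>f x - g x\<bar> * K ^ card S \<le> \<bar>f x - g x\<bar> * K ^ card (insert x S)"
      by (intro mult_left_mono) auto
    then show ?thesis using insert by (simp add: algebra_simps)
  qed
  finally show ?case .
qed

lemma (in prob_space) integrable_of_bool:
  assumes "Measurable.pred M \<phi>"
  shows "integrable M (\<lambda>\<omega>. of_bool (\<phi> \<omega>) :: real)"
  by (rule integrable_const_bound[where B = 1]) (use assms in auto)

lemma (in prob_space) prob_eq_integral_of_bool:
  assumes "Measurable.pred M \<phi>"
  shows "prob {\<omega> \<in> space M. \<phi> \<omega>} = (\<integral>\<omega>. of_bool (\<phi> \<omega>) \<partial>M)"
proof -
  have "(\<integral>\<omega>. of_bool (\<phi> \<omega>) \<partial>M) = (\<integral>\<omega>. indicator {\<omega> \<in> space M. \<phi> \<omega>} \<omega> \<partial>M)"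
    by (intro Bochner_Integration.integral_cong) (auto simp: indicator_def)
  also have "\<dots> = prob {\<omega> \<in> space M. \<phi> \<omega>}"
    using assms by (simp add: emeasure_finite less_top[symmetric])
  finally show ?thesis by simp
qed

lemma (in prob_space) tail_prob_tendsto_zero:
  assumes [measurable]: "Z \<in> borel_measurable M"
  shows "(\<lambda>L::nat. prob {\<omega> \<in> space M. real L < \<bar>Z \<omega>\<bar>}) \<longlonglongrightarrow> 0"
proof -
  let ?A = "\<lambda>L::nat. {\<omega> \<in> space M. real L < \<bar>Z \<omega>\<bar>}"
  have "(\<lambda>L. prob (?A L)) \<longlonglongrightarrow> prob (\<Inter>L. ?A L)"
    by (rule finite_Lim_measure_decseq) (auto simp: decseq_def)
  moreover have "(\<Inter>L. ?A L) = {}"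
  proof safe
    fix \<omega>
    assume "\<omega> \<in> (\<Inter>L. ?A L)"
    obtain L :: nat where "\<bar>Z \<omega>\<bar> < real L"
      using reals_Archimedean2 by blast
    moreover have "real L < \<bar>Z \<omega>\<bar>"
      using \<open>\<omega> \<in> (\<Inter>L. ?A L)\<close> by auto
    ultimately show "\<omega> \<in> {}" by linarith
  qed
  ultimately show ?thesis by simp
qed

text \<open>Right continuity of \<open>c \<mapsto> P(\<bar>Z\<bar> \<le> c)\<close>, used to remove the enlargement of the box
  at the very end.\<close>

lemma (in prob_space) prob_abs_le_right_continuous:
  assumes [measurable]: "Z \<in> borel_measurable M"
  shows "(\<lambda>k. prob {\<omega> \<in> space M. \<bar>Z \<omega>\<bar> \<le> c + 1 / Suc k}) \<longlonglongrightarrow> prob {\<omega> \<in> space M. \<bar>Z \<omega>\<bar> \<le> c}"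
proof -
  let ?A = "\<lambda>k::nat. {\<omega> \<in> space M. \<bar>Z \<omega>\<bar> \<le> c + 1 / Suc k}"
  have "(\<lambda>k. prob (?A k)) \<longlonglongrightarrow> prob (\<Inter>k. ?A k)"
  proof (rule finite_Lim_measure_decseq)
    show "range ?A \<subseteq> sets M" by auto
    show "decseq ?A"
    proof (rule decseq_SucI)
      fix k :: nat
      have "c + 1 / Suc (Suc k) \<le> c + 1 / Suc k"
        by (intro add_left_mono) (auto simp: frac_le)
      then show "?A (Suc k) \<subseteq> ?A k" by auto
    qed
  qed
  moreover have "(\<Inter>k. ?A k) = {\<omega> \<in> space M. \<bar>Z \<omega>\<bar> \<le> c}"
  proof (intro set_eqI iffI)
    fix \<omega>
    assume "\<omega> \<in> (\<Inter>k. ?A k)"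
    then have "\<omega> \<in> space M" and bounds: "\<And>k. \<bar>Z \<omega>\<bar> \<le> c + 1 / Suc k" by auto
    have "(\<lambda>k. c + 1 / Suc k) \<longlonglongrightarrow> c + 0"
      by (intro tendsto_add tendsto_const)
        (use LIMSEQ_inverse_real_of_nat in \<open>simp add: inverse_eq_divide\<close>)
    then have "\<bar>Z \<omega>\<bar> \<le> c"
      using bounds by (intro LIMSEQ_le_const[where X = "\<lambda>k. c + 1 / Suc k"]) auto
    then show "\<omega> \<in> {\<omega> \<in> space M. \<bar>Z \<omega>\<bar> \<le> c}"
      using \<open>\<omega> \<in> space M\<close> by simp
  next
    fix \<omega>
    assume "\<omega> \<in> {\<omega> \<in> space M. \<bar>Z \<omega>\<bar> \<le> c}"
    then show "\<omega> \<in> (\<Inter>k. ?A k)"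
      by (auto intro: order_trans[OF _ le_add_same_cancel1[THEN iffD2]])
  qed
  ultimately show ?thesis by simp
qed

section \<open>A cut-off function for a box\<close>

definition trig_approximable :: "nat \<Rightarrow> (real \<Rightarrow> real) \<Rightarrow> bool" where
  "trig_approximable n b \<longleftrightarrow> (\<forall>\<epsilon>>0. \<exists>a. a \<in> borel_measurable borel \<and> (\<forall>x. \<bar>a x - b x\<bar> \<le> \<epsilon>)
      \<and> (\<forall>k<n. (\<lambda>x. complex_of_real (a (x k))) \<in> trig_poly n))"

lemma trig_approximable_cos_poly:
  assumes "\<And>\<epsilon>. \<epsilon> > 0 \<Longrightarrow> \<exists>p. real_polynomial_function p \<and> (\<forall>x. \<bar>p (cos (w * x)) - b x\<bar> \<le> \<epsilon>)"
  shows "trig_approximable n b"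
  unfolding trig_approximable_def
proof (intro allI impI)
  fix \<epsilon> :: real
  assume "\<epsilon> > 0"
  then obtain p where p: "real_polynomial_function p" "\<And>x. \<bar>p (cos (w * x)) - b x\<bar> \<le> \<epsilon>"
    using assms by blast
  have "continuous_on UNIV p"
    using p(1) continuous_on_polymonial_function real_polynomial_function_eq by blast
  then have [measurable]: "p \<in> borel_measurable borel"
    by (rule borel_measurable_continuous_onI)
  show "\<exists>a. a \<in> borel_measurable borel \<and> (\<forall>x. \<bar>a x - b x\<bar> \<le> \<epsilon>)
      \<and> (\<forall>k<n. (\<lambda>x. complex_of_real (a (x k))) \<in> trig_poly n)"
  proof (intro exI[of _ "\<lambda>x. p (cos (w * x))"] conjI allI impI)
    show "(\<lambda>x. p (cos (w * x))) \<in> borel_measurable borel"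
      by measurable
    show "\<bar>p (cos (w * x)) - b x\<bar> \<le> \<epsilon>" for x
      by (rule p(2))
    show "(\<lambda>x. complex_of_real (p (cos (w * x k)))) \<in> trig_poly n" if "k < n" for k
      by (rule trig_poly_poly_cos_coordinate[OF p(1) that])
  qed
qed

text \<open>The cut-off: a clipped affine function of \<open>cos (pi x / L)\<close>, equal to \<open>1\<close> on \<open>[-z, z]\<close>
  and to \<open>0\<close> for \<open>z' \<le> \<bar>x\<bar> \<le> L\<close> (when \<open>0 \<le> z < z' < L\<close>).  Being a continuous function of
  \<open>cos\<close>, it is approximable by trigonometric polynomials.\<close>

definition cutoff :: "real \<Rightarrow> real \<Rightarrow> real \<Rightarrow> real \<Rightarrow> real" where
  "cutoff z z' L x = max 0 (min 1
     ((cos (pi / L * x) - cos (pi / L * z')) / (cos (pi / L * z) - cos (pi / L * z'))))"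

lemma cutoff_measurable [measurable]: "cutoff z z' L \<in> borel_measurable borel"
  unfolding cutoff_def by measurable

lemma cutoff_bounds: "0 \<le> cutoff z z' L x" "cutoff z z' L x \<le> 1"
  unfolding cutoff_def by auto

lemma cos_scaled_antimono:
  assumes "0 < L" "0 \<le> u" "u \<le> v" "v \<le> L"
  shows "cos (pi / L * v) \<le> cos (pi / L * u)"
proof (rule cos_monotone_0_pi_le)
  have "0 < pi / L" using assms(1) by simp
  then show "0 \<le> pi / L * u" "pi / L * u \<le> pi / L * v"
    using assms(2,3) by (intro mult_nonneg_nonneg mult_left_mono; simp)+
  have "pi / L * v \<le> pi / L * L"
    using \<open>0 < pi / L\<close> assms(4) by (intro mult_left_mono) simp_all
  then show "pi / L * v \<le> pi" using assms(1) by simp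
qed

lemma cos_scaled_strict_antimono:
  assumes "0 < L" "0 \<le> u" "u < v" "v \<le> L"
  shows "cos (pi / L * v) < cos (pi / L * u)"
proof (rule cos_monotone_0_pi)
  have "0 < pi / L" using assms(1) by simp
  then show "0 \<le> pi / L * u" "pi / L * u < pi / L * v"
    using assms(2,3) by (intro mult_nonneg_nonneg mult_strict_left_mono; simp)+
  have "pi / L * v \<le> pi / L * L"
    using \<open>0 < pi / L\<close> assms(4) by (intro mult_left_mono) simp_all
  then show "pi / L * v \<le> pi" using assms(1) by simp
qed

lemma cutoff_cos_gap:
  assumes "0 \<le> z" "z < z'" "z' < L"
  shows "cos (pi / L * z') < cos (pi / L * z)"
  using assms by (intro cos_scaled_strict_antimono) auto

lemma cos_abs_scaled: "cos (w * \<bar>x\<bar>) = cos (w * x)" for w x :: real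
  by (cases "x \<ge> 0") auto

lemma cutoff_eq_1:
  assumes "0 \<le> z" "z < z'" "z' < L" and "\<bar>x\<bar> \<le> z"
  shows "cutoff z z' L x = 1"
proof -
  have "cos (pi / L * z) \<le> cos (pi / L * \<bar>x\<bar>)"
    by (rule cos_scaled_antimono) (use assms in auto)
  then have "cos (pi / L * z) \<le> cos (pi / L * x)"
    by (simp only: cos_abs_scaled)
  then show ?thesis
    using cutoff_cos_gap[OF assms(1-3)] by (simp add: cutoff_def field_simps)
qed

lemma cutoff_eq_0:
  assumes "0 \<le> z" "z < z'" "z' < L" and "z' \<le> \<bar>x\<bar>" "\<bar>x\<bar> \<le> L"
  shows "cutoff z z' L x = 0"
proof -
  have "cos (pi / L * \<bar>x\<bar>) \<le> cos (pi / L * z')"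
    by (rule cos_scaled_antimono) (use assms in auto)
  then have "cos (pi / L * x) \<le> cos (pi / L * z')"
    by (simp only: cos_abs_scaled)
  then show ?thesis
    using cutoff_cos_gap[OF assms(1-3)] by (simp add: cutoff_def field_simps)
qed

lemma trig_approximable_cutoff:
  assumes "0 \<le> z" "z < z'" "z' < L"
  shows "trig_approximable n (cutoff z z' L)"
proof (rule trig_approximable_cos_poly)
  define c0 c1 where "c0 = cos (pi / L * z)" and "c1 = cos (pi / L * z')"
  define \<psi> where "\<psi> c = max 0 (min 1 ((c - c1) / (c0 - c1)))" for c
  have "c1 < c0"
    unfolding c0_def c1_def by (rule cutoff_cos_gap[OF assms])
  then have "continuous_on {-1..1} \<psi>"
    unfolding \<psi>_def by (intro continuous_intros) auto
  fix \<epsilon> :: real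
  assume "\<epsilon> > 0"
  from Stone_Weierstrass_polynomial_function[OF compact_Icc \<open>continuous_on {-1..1} \<psi>\<close> this]
  obtain p where p: "polynomial_function p" "\<forall>c\<in>{-1..1}. norm (\<psi> c - p c) < \<epsilon>"
    by blast
  show "\<exists>p. real_polynomial_function p \<and> (\<forall>x. \<bar>p (cos (pi / L * x)) - cutoff z z' L x\<bar> \<le> \<epsilon>)"
  proof (intro exI conjI allI)
    show "real_polynomial_function p"
      using p(1) real_polynomial_function_eq by blast
    show "\<bar>p (cos (pi / L * x)) - cutoff z z' L x\<bar> \<le> \<epsilon>" for x
      using p(2) by (simp add: cutoff_def \<psi>_def c0_def c1_def abs_minus_commute less_imp_le)
  qed
qed

lemma box_indicator_le_prod:
  fixes b :: "real \<Rightarrow> real" and y :: "nat \<Rightarrow> real"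
  assumes "\<And>x. 0 \<le> b x" and "\<And>x. \<bar>x\<bar> \<le> z \<Longrightarrow> b x = 1"
  shows "of_bool (\<forall>j<n. \<bar>y j\<bar> \<le> z) \<le> (\<Prod>j<n. b (y j))"
  using assms by (auto intro: prod_nonneg)

text \<open>\<dots> and is dominated by the indicator of the large box plus the indicators of the
  tails \<open>\<bar>y\<^sub>j\<bar> > L\<close>, where the periodic cut-off may be nonzero again.\<close>

lemma prod_le_box_indicator_plus_tails:
  fixes b :: "real \<Rightarrow> real" and y :: "nat \<Rightarrow> real"
  assumes "\<And>x. 0 \<le> b x" "\<And>x. b x \<le> 1" and "\<And>x. z' \<le> \<bar>x\<bar> \<Longrightarrow> \<bar>x\<bar> \<le> L \<Longrightarrow> b x = 0"
  shows "(\<Prod>j<n. b (y j)) \<le> of_bool (\<forall>j<n. \<bar>y j\<bar> \<le> z') + (\<Sum>j<n. of_bool (L < \<bar>y j\<bar>))"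
proof -
  have tails_nonneg: "0 \<le> (\<Sum>j<n. of_bool (L < \<bar>y j\<bar>) :: real)"
    by (rule sum_nonneg) simp
  show ?thesis
  proof (cases "\<forall>j<n. \<bar>y j\<bar> \<le> z'")
    case True
    have "(\<Prod>j<n. b (y j)) \<le> 1" by (rule prod_le_1) (use assms in auto)
    then show ?thesis using True tails_nonneg by simp
  next
    case False
    then obtain k where k: "k < n" "z' < \<bar>y k\<bar>" by (auto simp: not_le)
    show ?thesis
    proof (cases "\<bar>y k\<bar> \<le> L")
      case True
      then have "b (y k) = 0" using k by (intro assms(3)) auto
      then have "(\<Prod>j<n. b (y j)) = 0" using k by (intro prod_zero) auto
      moreover have "0 \<le> (of_bool (\<forall>j<n. \<bar>y j\<bar> \<le> z') :: real)" by simp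
      ultimately show ?thesis using tails_nonneg by linarith
    next
      case False
      have "(\<Prod>j<n. b (y j)) \<le> 1" by (rule prod_le_1) (use assms in auto)
      also have "(1::real) = of_bool (L < \<bar>y k\<bar>)" using False by simp
      also have "\<dots> \<le> (\<Sum>j<n. of_bool (L < \<bar>y j\<bar>))"
        by (rule member_le_sum) (use k in auto)
      finally have "(\<Prod>j<n. b (y j)) \<le> (\<Sum>j<n. of_bool (L < \<bar>y j\<bar>))" .
      moreover have "0 \<le> (of_bool (\<forall>j<n. \<bar>y j\<bar> \<le> z') :: real)" by simp
      ultimately show ?thesis by linarith
    qed
  qed
qed

section \<open>Vectors with equal characteristic functions\<close>

locale equal_char_vectors = P: prob_space P + Q: prob_space Q
  for P :: "'a measure" and Q :: "'b measure" +
  fixes n :: nat and X :: "nat \<Rightarrow> 'a \<Rightarrow> real" and Y :: "nat \<Rightarrow> 'b \<Rightarrow> real"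
  assumes X_measurable [measurable]: "\<And>j. X j \<in> borel_measurable P"
    and Y_measurable [measurable]: "\<And>j. Y j \<in> borel_measurable Q"
    and char_eq: "\<And>t. (\<integral>\<omega>. iexp (\<Sum>j<n. t j * X j \<omega>) \<partial>P) = (\<integral>\<omega>. iexp (\<Sum>j<n. t j * Y j \<omega>) \<partial>Q)"
begin

lemma trig_poly_integral_eq:
  assumes "F \<in> trig_poly n"
  shows "(\<integral>\<omega>. F (\<lambda>j. X j \<omega>) \<partial>P) = (\<integral>\<omega>. F (\<lambda>j. Y j \<omega>) \<partial>Q)"
  using assms
proof induction
  case (character t)
  show ?case by (rule char_eq)
next
  case (scale F c)
  then show ?case by simp
next
  case (add F G)
  then show ?case
    by (simp add: Bochner_Integration.integral_add P.trig_poly_integrable Q.trig_poly_integrable)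
qed

lemma integral_prod_le_plus_error:
  fixes a b :: "real \<Rightarrow> real" and \<epsilon> :: real
  assumes a [measurable]: "a \<in> borel_measurable borel" and b [measurable]: "b \<in> borel_measurable borel"
    and b01: "\<And>x. 0 \<le> b x" "\<And>x. b x \<le> 1" and close: "\<And>x. \<bar>a x - b x\<bar> \<le> \<epsilon>" and "\<epsilon> \<le> 1"
    and a_trig: "\<And>k. k < n \<Longrightarrow> (\<lambda>x. complex_of_real (a (x k))) \<in> trig_poly n"
  shows "(\<integral>\<omega>. (\<Prod>j<n. b (X j \<omega>)) \<partial>P) \<le> (\<integral>\<omega>. (\<Prod>j<n. b (Y j \<omega>)) \<partial>Q) + 2 * (2 ^ n * (n * \<epsilon>))"
proof -
  have a_bound: "\<bar>a x\<bar> \<le> 2" and b_bound: "\<bar>b x\<bar> \<le> 2" for x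
    using close[of x] b01[of x] \<open>\<epsilon> \<le> 1\<close> by (auto simp: abs_le_iff)
  define C where "C = 2 ^ n * (n * \<epsilon>)"
  have prod_close: "\<bar>(\<Prod>j<n. b (y j)) - (\<Prod>j<n. a (y j))\<bar> \<le> C" for y :: "nat \<Rightarrow> real"
  proof -
    have "\<bar>(\<Prod>j<n. b (y j)) - (\<Prod>j<n. a (y j))\<bar> \<le> 2 ^ card {..<n} * (\<Sum>j<n. \<bar>b (y j) - a (y j)\<bar>)"
      by (rule abs_prod_diff_le) (use a_bound b_bound in auto)
    also have "\<dots> \<le> 2 ^ n * (\<Sum>j<n. \<epsilon>)"
      unfolding card_lessThan using close by (intro mult_left_mono sum_mono) (auto simp: abs_minus_commute)
    finally show ?thesis by (simp add: C_def)
  qed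
  have b_le: "(\<Prod>j<n. b (y j)) \<le> (\<Prod>j<n. a (y j)) + C"
    and a_le: "(\<Prod>j<n. a (y j)) \<le> (\<Prod>j<n. b (y j)) + C" for y
    using prod_close[of y] unfolding abs_le_iff by linarith+
  have same: "(\<integral>\<omega>. (\<Prod>j<n. a (X j \<omega>)) \<partial>P) = (\<integral>\<omega>. (\<Prod>j<n. a (Y j \<omega>)) \<partial>Q)"
  proof -
    have "(\<lambda>x. \<Prod>j<n. complex_of_real (a (x j))) \<in> trig_poly n"
      by (rule trig_poly_prod) (auto intro: a_trig)
    from trig_poly_integral_eq[OF this]
    have "complex_of_real (\<integral>\<omega>. (\<Prod>j<n. a (X j \<omega>)) \<partial>P) = complex_of_real (\<integral>\<omega>. (\<Prod>j<n. a (Y j \<omega>)) \<partial>Q)"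
      by (simp only: of_real_prod[symmetric] integral_complex_of_real)
    then show ?thesis by (simp only: of_real_eq_iff)
  qed
  have int_a: "integrable P (\<lambda>\<omega>. \<Prod>j<n. a (X j \<omega>))" "integrable Q (\<lambda>\<omega>. \<Prod>j<n. a (Y j \<omega>))"
    by (rule P.integrable_prod_bounded[OF a X_measurable a_bound],
        rule Q.integrable_prod_bounded[OF a Y_measurable a_bound])
  have int_b: "integrable P (\<lambda>\<omega>. \<Prod>j<n. b (X j \<omega>))" "integrable Q (\<lambda>\<omega>. \<Prod>j<n. b (Y j \<omega>))"
    by (rule P.integrable_prod_bounded[OF b X_measurable b_bound],
        rule Q.integrable_prod_bounded[OF b Y_measurable b_bound])
  have "(\<integral>\<omega>. (\<Prod>j<n. b (X j \<omega>)) \<partial>P) \<le> (\<integral>\<omega>. (\<Prod>j<n. a (X j \<omega>)) \<partial>P) + C"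
    by (intro P.integral_le_plus_const int_a int_b b_le)
  also have "\<dots> = (\<integral>\<omega>. (\<Prod>j<n. a (Y j \<omega>)) \<partial>Q) + C"
    by (simp only: same)
  also have "\<dots> \<le> (\<integral>\<omega>. (\<Prod>j<n. b (Y j \<omega>)) \<partial>Q) + C + C"
    by (intro add_right_mono Q.integral_le_plus_const int_a int_b a_le)
  moreover have "C + C = 2 * (2 ^ n * (n * \<epsilon>))"
    by (simp add: C_def)
  ultimately show ?thesis
    by linarith
qed

lemma integral_prod_le:
  fixes b :: "real \<Rightarrow> real"
  assumes b [measurable]: "b \<in> borel_measurable borel" and b01: "\<And>x. 0 \<le> b x" "\<And>x. b x \<le> 1"
    and approx: "trig_approximable n b"
  shows "(\<integral>\<omega>. (\<Prod>j<n. b (X j \<omega>)) \<partial>P) \<le> (\<integral>\<omega>. (\<Prod>j<n. b (Y j \<omega>)) \<partial>Q)"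
proof (rule field_le_epsilon)
  fix \<eta> :: real
  assume "\<eta> > 0"
  define D :: real where "D = 2 * 2 ^ n * (real n + 1)"
  have "D > 0" by (simp add: D_def)
  define \<epsilon> where "\<epsilon> = min 1 (\<eta> / D)"
  have "\<epsilon> > 0" using \<open>\<eta> > 0\<close> \<open>D > 0\<close> by (simp add: \<epsilon>_def)
  then obtain a where a: "a \<in> borel_measurable borel" and close: "\<And>x. \<bar>a x - b x\<bar> \<le> \<epsilon>"
    and a_trig: "\<And>k. k < n \<Longrightarrow> (\<lambda>x. complex_of_real (a (x k))) \<in> trig_poly n"
    using approx unfolding trig_approximable_def by blast
  have "\<epsilon> \<le> \<eta> / D" by (simp add: \<epsilon>_def)
  then have "\<epsilon> * D \<le> \<eta>" using \<open>D > 0\<close> by (simp add: le_divide_eq)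
  moreover have "2 * (2 ^ n * (n * \<epsilon>)) \<le> \<epsilon> * D"
    using \<open>\<epsilon> > 0\<close> by (simp add: D_def algebra_simps)
  moreover have "(\<integral>\<omega>. (\<Prod>j<n. b (X j \<omega>)) \<partial>P) \<le> (\<integral>\<omega>. (\<Prod>j<n. b (Y j \<omega>)) \<partial>Q) + 2 * (2 ^ n * (n * \<epsilon>))"
    by (rule integral_prod_le_plus_error[OF a b b01 close _ a_trig]) (simp add: \<epsilon>_def)
  ultimately show "(\<integral>\<omega>. (\<Prod>j<n. b (X j \<omega>)) \<partial>P) \<le> (\<integral>\<omega>. (\<Prod>j<n. b (Y j \<omega>)) \<partial>Q) + \<eta>"
    by linarith
qed

lemma box_prob_le_plus_tails:
  assumes "0 \<le> z" "z < z'" "z' < L"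
  shows "P.prob {\<omega> \<in> space P. \<forall>j<n. \<bar>X j \<omega>\<bar> \<le> z}
      \<le> Q.prob {\<omega> \<in> space Q. \<forall>j<n. \<bar>Y j \<omega>\<bar> \<le> z'} + (\<Sum>j<n. Q.prob {\<omega> \<in> space Q. L < \<bar>Y j \<omega>\<bar>})"
proof -
  let ?b = "cutoff z z' L"
  have pred_box_X: "Measurable.pred P (\<lambda>\<omega>. \<forall>j<n. \<bar>X j \<omega>\<bar> \<le> z)"
    and pred_box_Y: "Measurable.pred Q (\<lambda>\<omega>. \<forall>j<n. \<bar>Y j \<omega>\<bar> \<le> z')"
    and pred_tail_Y: "\<And>j. Measurable.pred Q (\<lambda>\<omega>. L < \<bar>Y j \<omega>\<bar>)"
    by measurable
  have sum_of_integrals: "(\<integral>\<omega>. (\<Sum>j<n. of_bool (L < \<bar>Y j \<omega>\<bar>) :: real) \<partial>Q)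
      = (\<Sum>j<n. (\<integral>\<omega>. of_bool (L < \<bar>Y j \<omega>\<bar>) \<partial>Q))"
    by (intro Bochner_Integration.integral_sum Q.integrable_of_bool pred_tail_Y)
  have "P.prob {\<omega> \<in> space P. \<forall>j<n. \<bar>X j \<omega>\<bar> \<le> z} = (\<integral>\<omega>. of_bool (\<forall>j<n. \<bar>X j \<omega>\<bar> \<le> z) \<partial>P)"
    by (rule P.prob_eq_integral_of_bool[OF pred_box_X])
  also have "\<dots> \<le> (\<integral>\<omega>. (\<Prod>j<n. ?b (X j \<omega>)) \<partial>P)"
    using cutoff_bounds cutoff_eq_1[OF assms]
    by (intro Bochner_Integration.integral_mono box_indicator_le_prod P.integrable_of_bool[OF pred_box_X]
        P.integrable_prod_bounded[where B = 1] cutoff_measurable X_measurable) auto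
  also have "\<dots> \<le> (\<integral>\<omega>. (\<Prod>j<n. ?b (Y j \<omega>)) \<partial>Q)"
    by (rule integral_prod_le[OF cutoff_measurable cutoff_bounds trig_approximable_cutoff[OF assms]])
  also have "\<dots> \<le> (\<integral>\<omega>. of_bool (\<forall>j<n. \<bar>Y j \<omega>\<bar> \<le> z') + (\<Sum>j<n. of_bool (L < \<bar>Y j \<omega>\<bar>)) \<partial>Q)"
    using cutoff_bounds cutoff_eq_0[OF assms]
    by (intro Bochner_Integration.integral_mono prod_le_box_indicator_plus_tails Bochner_Integration.integrable_add
        Bochner_Integration.integrable_sum Q.integrable_of_bool pred_box_Y pred_tail_Y
        Q.integrable_prod_bounded[where B = 1] cutoff_measurable Y_measurable) auto
  also have "\<dots> = (\<integral>\<omega>. of_bool (\<forall>j<n. \<bar>Y j \<omega>\<bar> \<le> z') \<partial>Q)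
      + (\<Sum>j<n. (\<integral>\<omega>. of_bool (L < \<bar>Y j \<omega>\<bar>) \<partial>Q))"
    unfolding sum_of_integrals[symmetric]
    by (intro Bochner_Integration.integral_add Q.integrable_of_bool pred_box_Y
        Bochner_Integration.integrable_sum pred_tail_Y)
  also have "\<dots> = Q.prob {\<omega> \<in> space Q. \<forall>j<n. \<bar>Y j \<omega>\<bar> \<le> z'}
      + (\<Sum>j<n. Q.prob {\<omega> \<in> space Q. L < \<bar>Y j \<omega>\<bar>})"
    by (simp add: Q.prob_eq_integral_of_bool[OF pred_box_Y] Q.prob_eq_integral_of_bool[OF pred_tail_Y])
  finally show ?thesis .
qed

lemma box_prob_le:
  assumes "0 \<le> z" "z < z'"
  shows "P.prob {\<omega> \<in> space P. \<forall>j<n. \<bar>X j \<omega>\<bar> \<le> z} \<le> Q.prob {\<omega> \<in> space Q. \<forall>j<n. \<bar>Y j \<omega>\<bar> \<le> z'}"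
proof -
  let ?tails = "\<lambda>L::nat. \<Sum>j<n. Q.prob {\<omega> \<in> space Q. real L < \<bar>Y j \<omega>\<bar>}"
  have "(\<lambda>L. Q.prob {\<omega> \<in> space Q. \<forall>j<n. \<bar>Y j \<omega>\<bar> \<le> z'} + ?tails L)
      \<longlonglongrightarrow> Q.prob {\<omega> \<in> space Q. \<forall>j<n. \<bar>Y j \<omega>\<bar> \<le> z'} + (\<Sum>j<n. 0)"
    by (intro tendsto_add tendsto_const tendsto_sum Q.tail_prob_tendsto_zero) simp
  moreover have "eventually (\<lambda>L. P.prob {\<omega> \<in> space P. \<forall>j<n. \<bar>X j \<omega>\<bar> \<le> z}
      \<le> Q.prob {\<omega> \<in> space Q. \<forall>j<n. \<bar>Y j \<omega>\<bar> \<le> z'} + ?tails L) sequentially"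
  proof (rule eventually_sequentiallyI)
    fix L :: nat
    assume "nat \<lceil>z'\<rceil> + 1 \<le> L"
    then have "z' < real L" by linarith
    then show "P.prob {\<omega> \<in> space P. \<forall>j<n. \<bar>X j \<omega>\<bar> \<le> z}
        \<le> Q.prob {\<omega> \<in> space Q. \<forall>j<n. \<bar>Y j \<omega>\<bar> \<le> z'} + ?tails L"
      by (rule box_prob_le_plus_tails[OF assms])
  qed
  ultimately show ?thesis
    by (simp add: tendsto_lowerbound)
qed

end

section \<open>Centred Gaussian random variables\<close>

text \<open>A centred Gaussian variable has the law of \<open>\<sigma> g\<close> for a standard normal \<open>g\<close> and some
  \<open>\<sigma> \<ge> 0\<close>; this covers the degenerate case \<open>\<sigma> = 0\<close> uniformly.\<close>

abbreviation N01 :: "real measure" where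
  "N01 \<equiv> std_normal_distribution"

lemma prob_space_N01: "prob_space N01"
  by (rule prob_space_normal_density) simp

lemma sets_N01 [measurable_cong]: "sets N01 = sets borel"
  by simp

lemma integral_by_law:
  fixes g :: "real \<Rightarrow> 'b::{banach, second_countable_topology}"
  assumes law: "distr M lborel S = distr N lborel T"
    and [measurable]: "S \<in> borel_measurable M" "T \<in> borel_measurable N" "g \<in> borel_measurable borel"
  shows "(\<integral>\<omega>. g (S \<omega>) \<partial>M) = (\<integral>x. g (T x) \<partial>N)"
proof -
  have "(\<integral>\<omega>. g (S \<omega>) \<partial>M) = integral\<^sup>L (distr M lborel S) g"
    by (rule integral_distr[symmetric]) auto
  also have "\<dots> = integral\<^sup>L (distr N lborel T) g"
    by (simp only: law)
  also have "\<dots> = (\<integral>x. g (T x) \<partial>N)"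
    by (rule integral_distr) auto
  finally show ?thesis .
qed

lemma integrable_by_law:
  fixes g :: "real \<Rightarrow> 'b::{banach, second_countable_topology}"
  assumes law: "distr M lborel S = distr N lborel T"
    and [measurable]: "S \<in> borel_measurable M" "T \<in> borel_measurable N" "g \<in> borel_measurable borel"
  shows "integrable M (\<lambda>\<omega>. g (S \<omega>)) \<longleftrightarrow> integrable N (\<lambda>x. g (T x))"
proof -
  have "integrable M (\<lambda>\<omega>. g (S \<omega>)) \<longleftrightarrow> integrable (distr M lborel S) g"
    by (rule integrable_distr_eq[symmetric]) auto
  also have "\<dots> \<longleftrightarrow> integrable (distr N lborel T) g"
    by (simp only: law)
  also have "\<dots> \<longleftrightarrow> integrable N (\<lambda>x. g (T x))"
    by (rule integrable_distr_eq) auto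
  finally show ?thesis .
qed

lemma measure_by_law:
  assumes law: "distr M lborel S = distr N lborel T"
    and [measurable]: "S \<in> borel_measurable M" "T \<in> borel_measurable N" "A \<in> sets borel"
  shows "measure M {\<omega> \<in> space M. S \<omega> \<in> A} = measure N {x \<in> space N. T x \<in> A}"
proof -
  have "measure M {\<omega> \<in> space M. S \<omega> \<in> A} = measure (distr M lborel S) A"
    by (subst measure_distr) (auto intro: arg_cong[where f = "measure M"])
  also have "\<dots> = measure (distr N lborel T) A"
    by (simp only: law)
  also have "\<dots> = measure N {x \<in> space N. T x \<in> A}"
    by (subst measure_distr) (auto intro: arg_cong[where f = "measure N"])
  finally show ?thesis .
qed

lemma distr_N01_scale:
  assumes "\<sigma> > 0"
  shows "distr N01 lborel (\<lambda>x. \<sigma> * x) = density lborel (normal_density 0 \<sigma>)"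
proof -
  interpret N: prob_space N01 by (rule prob_space_N01)
  have "distributed N01 lborel (\<lambda>x. x) std_normal_density"
    unfolding distributed_def by (auto simp: distr_id2 cong: distr_cong)
  then have "distributed N01 lborel (\<lambda>x. 0 + \<sigma> * x) (normal_density (0 + \<sigma> * 0) (\<bar>\<sigma>\<bar> * 1))"
    by (rule N.normal_density_affine) (use assms in auto)
  then show ?thesis using assms unfolding distributed_def by simp
qed

lemma centered_gaussian_rv_law:
  assumes "prob_space M" and S: "centered_gaussian_rv M S"
  obtains \<sigma> where "\<sigma> \<ge> 0" and "distr M lborel S = distr N01 lborel (\<lambda>x. \<sigma> * x)"
    and "(\<integral>\<omega>. (S \<omega>)\<^sup>2 \<partial>M) = \<sigma>\<^sup>2"
proof -
  interpret prob_space M by fact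
  have [measurable]: "S \<in> borel_measurable M"
    using S unfolding centered_gaussian_rv_def by simp
  have law: "\<exists>\<sigma>\<ge>0. distr M lborel S = distr N01 lborel (\<lambda>x. \<sigma> * x)"
  proof -
    consider "AE \<omega> in M. S \<omega> = 0" | \<sigma> where "\<sigma> > 0" "distributed M lborel S (normal_density 0 \<sigma>)"
      using S unfolding centered_gaussian_rv_def by blast
    then show ?thesis
    proof cases
      case 1
      interpret N: prob_space N01 by (rule prob_space_N01)
      have "distr M lborel S = distr M lborel (\<lambda>_. 0 :: real)"
        by (rule distr_cong_AE) (use 1 in auto)
      also have "\<dots> = return lborel 0" by simp
      also have "\<dots> = distr N01 lborel (\<lambda>_. 0 :: real)" by simp
      also have "\<dots> = distr N01 lborel (\<lambda>x. 0 * x)" by simp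
      finally show ?thesis by blast
    next
      case 2
      then show ?thesis
        using distr_N01_scale[of \<sigma>] unfolding distributed_def by (intro exI[of _ \<sigma>]) auto
    qed
  qed
  then obtain \<sigma> where "\<sigma> \<ge> 0" and L: "distr M lborel S = distr N01 lborel (\<lambda>x. \<sigma> * x)"
    by blast
  moreover have "(\<integral>\<omega>. (S \<omega>)\<^sup>2 \<partial>M) = \<sigma>\<^sup>2"
  proof -
    have "(\<integral>\<omega>. (S \<omega>)\<^sup>2 \<partial>M) = (\<integral>x. (\<sigma> * x)\<^sup>2 \<partial>N01)"
      by (rule integral_by_law[OF L]) auto
    also have "\<dots> = \<sigma>\<^sup>2"
      using std_normal_distribution_even_moments(1)[of 1] by (simp add: power_mult_distrib)
    finally show ?thesis .
  qed
  ultimately show thesis by (rule that)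
qed

lemma centered_gaussian_rv_moments:
  assumes "prob_space M" and S: "centered_gaussian_rv M S"
  shows "integrable M (\<lambda>\<omega>. (S \<omega>)\<^sup>2)"
    and "(\<integral>\<omega>. iexp (S \<omega>) \<partial>M) = complex_of_real (exp (- (\<integral>\<omega>. (S \<omega>)\<^sup>2 \<partial>M) / 2))"
proof -
  have [measurable]: "S \<in> borel_measurable M"
    using S unfolding centered_gaussian_rv_def by simp
  obtain \<sigma> where law: "distr M lborel S = distr N01 lborel (\<lambda>x. \<sigma> * x)"
    and variance: "(\<integral>\<omega>. (S \<omega>)\<^sup>2 \<partial>M) = \<sigma>\<^sup>2"
    by (rule centered_gaussian_rv_law[OF assms])
  have "integrable N01 (\<lambda>x. (\<sigma> * x)\<^sup>2)"
    using integrable_std_normal_distribution_moment[of 2] by (simp add: power_mult_distrib)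
  then show "integrable M (\<lambda>\<omega>. (S \<omega>)\<^sup>2)"
    using integrable_by_law[OF law, of "\<lambda>x. x\<^sup>2"] by simp
  have "(\<integral>\<omega>. iexp (S \<omega>) \<partial>M) = (\<integral>x. iexp (\<sigma> * x) \<partial>N01)"
    by (rule integral_by_law[OF law]) measurable
  also have "\<dots> = char N01 \<sigma>"
    by (simp add: char_def)
  finally show "(\<integral>\<omega>. iexp (S \<omega>) \<partial>M) = complex_of_real (exp (- (\<integral>\<omega>. (S \<omega>)\<^sup>2 \<partial>M) / 2))"
    by (simp add: variance char_std_normal_distribution)
qed


section \<open>Anderson's inequality in dimension one\<close>

lemma std_normal_density_even: "std_normal_density (- x) = std_normal_density x"
  by (simp add: normal_density_def)

lemma std_normal_density_antimono:
  assumes "\<bar>x\<bar> \<le> \<bar>y\<bar>"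
  shows "std_normal_density y \<le> std_normal_density x"
proof -
  have "x\<^sup>2 \<le> y\<^sup>2" using assms by (metis abs_le_square_iff)
  then show ?thesis by (simp add: normal_density_def divide_right_mono)
qed

lemma emeasure_N01:
  assumes "A \<in> sets borel"
  shows "emeasure N01 A = (\<integral>\<^sup>+x. ennreal (std_normal_density x) * indicator A x \<partial>lborel)"
  by (rule emeasure_density) (use assms in auto)

text \<open>Translating the half-open interval \<open>[-l, l)\<close> by \<open>a \<ge> 0\<close> can only decrease its
  Gaussian mass: the part \<open>[l, a+l)\<close> gained is the mirror image under \<open>y \<mapsto> 2l + y\<close> of the part
  \<open>[-l, a-l)\<close> lost, and there the density is smaller.\<close>

lemma emeasure_N01_shifted_halfopen_le:
  assumes a: "a \<ge> 0" and l: "l \<ge> 0"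
  shows "emeasure N01 {a-l..<a+l} \<le> emeasure N01 {-l..<l}"
proof -
  let ?f = "\<lambda>x. ennreal (std_normal_density x)"
  let ?E = "\<lambda>A. (\<integral>\<^sup>+x. ?f x * indicator A x \<partial>lborel)"
  have split: "indicator {a-l..<a+l} x + indicator {-l..<a-l} x
      = (indicator {-l..<l} x + indicator {l..<a+l} x :: ennreal)" for x
    using a l by (auto simp: indicator_def)
  have "?E {a-l..<a+l} + ?E {-l..<a-l}
      = (\<integral>\<^sup>+x. ?f x * indicator {a-l..<a+l} x + ?f x * indicator {-l..<a-l} x \<partial>lborel)"
    by (rule nn_integral_add[symmetric]) auto
  also have "\<dots> = (\<integral>\<^sup>+x. ?f x * indicator {-l..<l} x + ?f x * indicator {l..<a+l} x \<partial>lborel)"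
    by (rule nn_integral_cong) (simp only: distrib_left[symmetric] split)
  also have "\<dots> = ?E {-l..<l} + ?E {l..<a+l}"
    by (rule nn_integral_add) auto
  finally have eq: "?E {a-l..<a+l} + ?E {-l..<a-l} = ?E {-l..<l} + ?E {l..<a+l}" .
  have shift: "?E {l..<a+l}
      = ennreal \<bar>1\<bar> * (\<integral>\<^sup>+y. ?f (2*l + 1 * y) * indicator {l..<a+l} (2*l + 1 * y) \<partial>lborel)"
    by (rule nn_integral_real_affine) auto
  have shift_ind: "indicator {l..<a+l} (2*l + y) = (indicator {-l..<a-l} y :: ennreal)" for y
    unfolding indicator_def by auto
  have "?E {l..<a+l} = (\<integral>\<^sup>+y. ?f (2*l + y) * indicator {-l..<a-l} y \<partial>lborel)"
    unfolding shift by (simp only: shift_ind abs_one ennreal_1 mult_1 mult_1_left)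
  also have "\<dots> \<le> ?E {-l..<a-l}"
  proof (rule nn_integral_mono)
    fix y
    show "?f (2*l + y) * indicator {-l..<a-l} y \<le> ?f y * indicator {-l..<a-l} y"
    proof (cases "y \<in> {-l..<a-l}")
      case True
      then have "\<bar>y\<bar> \<le> \<bar>2*l + y\<bar>" using l by auto
      then show ?thesis using True by (simp add: ennreal_leI std_normal_density_antimono)
    qed simp
  qed
  finally have gained_le_lost: "?E {l..<a+l} \<le> ?E {-l..<a-l}" .
  interpret N: prob_space N01 by (rule prob_space_N01)
  have "?E {-l..<a-l} = emeasure N01 {-l..<a-l}"
    by (rule emeasure_N01[symmetric]) auto
  then have finite: "?E {-l..<a-l} \<noteq> \<infinity>"
    using N.emeasure_finite by simp
  have "?E {-l..<a-l} + ?E {a-l..<a+l} \<le> ?E {-l..<a-l} + ?E {-l..<l}"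
    using add_left_mono[OF gained_le_lost, of "?E {-l..<l}"] unfolding eq[symmetric]
    by (simp only: add.commute)
  then have "?E {a-l..<a+l} \<le> ?E {-l..<l}"
    using finite by (simp only: ennreal_add_left_cancel_le) blast
  then show ?thesis by (simp only: emeasure_N01 atLeastLessThan_borel)
qed

text \<open>Points are null sets, so open and closed endpoints do not matter.\<close>

lemma emeasure_N01_singleton: "emeasure N01 {p} = 0"
proof -
  have "emeasure N01 {p} = (\<integral>\<^sup>+x. ennreal (std_normal_density x) * indicator {p} x \<partial>lborel)"
    by (rule emeasure_N01) simp
  also have "\<dots> = (\<integral>\<^sup>+(x::real). 0 \<partial>lborel)"
    using AE_lborel_singleton[of p] by (intro nn_integral_cong_AE) (auto elim!: eventually_mono)
  finally show ?thesis by simp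
qed

lemma emeasure_N01_reflect: "emeasure N01 {a-l..a+l} = emeasure N01 {-a-l..-a+l}"
proof -
  let ?f = "\<lambda>x. ennreal (std_normal_density x)"
  let ?E = "\<lambda>A. (\<integral>\<^sup>+x. ?f x * indicator A x \<partial>lborel)"
  have reflect: "?E {a-l..a+l}
      = ennreal \<bar>-1\<bar> * (\<integral>\<^sup>+y. ?f (0 + (-1) * y) * indicator {a-l..a+l} (0 + (-1) * y) \<partial>lborel)"
    by (rule nn_integral_real_affine) auto
  have reflect_ind: "indicator {a-l..a+l} (0 + (-1) * y) = (indicator {-a-l..-a+l} y :: ennreal)" for y
    unfolding indicator_def by auto
  have reflect_density: "?f (0 + (-1) * y) = ?f y" for y
    using std_normal_density_even[of y] by simp
  have "?E {a-l..a+l} = ?E {-a-l..-a+l}"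
    unfolding reflect
    by (simp only: reflect_ind reflect_density abs_minus_cancel abs_one ennreal_1 mult_1 mult_1_left)
  then show ?thesis by (simp only: emeasure_N01 atLeastAtMost_borel)
qed

lemma emeasure_N01_shifted_interval_le:
  assumes l: "l \<ge> 0"
  shows "emeasure N01 {a-l..a+l} \<le> emeasure N01 {-l..l}"
proof -
  have null: "{p} \<in> null_sets N01" for p
    using emeasure_N01_singleton[of p] by (auto simp: null_sets_def)
  have nonneg_shift: "emeasure N01 {b-l..b+l} \<le> emeasure N01 {-l..l}" if "b \<ge> 0" for b
  proof -
    have "emeasure N01 {b-l..b+l} = emeasure N01 ({b-l..<b+l} \<union> {b+l})"
      using l by (intro arg_cong[where f = "emeasure N01"]) auto
    also have "\<dots> = emeasure N01 {b-l..<b+l}"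
      by (rule emeasure_Un_null_set[OF _ null]) auto
    also have "\<dots> \<le> emeasure N01 {-l..<l}"
      by (rule emeasure_N01_shifted_halfopen_le[OF that l])
    also have "\<dots> = emeasure N01 ({-l..<l} \<union> {l})"
      by (rule emeasure_Un_null_set[OF _ null, symmetric]) auto
    also have "{-l..<l} \<union> {l} = {-l..l}"
      using l by auto
    finally show ?thesis .
  qed
  show ?thesis
  proof (cases "a \<ge> 0")
    case True
    then show ?thesis by (rule nonneg_shift)
  next
    case False
    then show ?thesis
      using nonneg_shift[of "-a"] emeasure_N01_reflect[of a l] by simp
  qed
qed

lemma affine_band_eq_interval:
  fixes c w z :: real
  assumes "c \<noteq> 0"
  shows "{x. \<bar>c * x + w\<bar> \<le> z} = {- w / c - z / \<bar>c\<bar> .. - w / c + z / \<bar>c\<bar>}"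
proof (rule set_eqI)
  fix x
  have "c * x + w = c * (x - (- w / c))"
    using assms by (simp add: field_simps)
  then have "\<bar>c * x + w\<bar> = \<bar>x - (- w / c)\<bar> * \<bar>c\<bar>"
    by (simp add: abs_mult mult.commute)
  then have "\<bar>c * x + w\<bar> \<le> z \<longleftrightarrow> \<bar>x - (- w / c)\<bar> \<le> z / \<bar>c\<bar>"
    using assms by (simp add: pos_le_divide_eq)
  then show "x \<in> {x. \<bar>c * x + w\<bar> \<le> z} \<longleftrightarrow> x \<in> {- w / c - z / \<bar>c\<bar> .. - w / c + z / \<bar>c\<bar>}"
    by (simp add: abs_le_iff) linarith
qed

lemma measure_N01_affine_band_le:
  assumes "z \<ge> 0"
  shows "measure N01 {x. \<bar>c * x + w\<bar> \<le> z} \<le> measure N01 {x. \<bar>c * x\<bar> \<le> z}"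
proof -
  interpret N: prob_space N01 by (rule prob_space_N01)
  show ?thesis
  proof (cases "c = 0")
    case True
    then have "{x. \<bar>c * x\<bar> \<le> z} = space N01" using assms by auto
    then show ?thesis using N.prob_le_1 N.prob_space by simp
  next
    case False
    define l where "l = z / \<bar>c\<bar>"
    have "l \<ge> 0" using assms by (simp add: l_def)
    have shifted: "{x. \<bar>c * x + w\<bar> \<le> z} = {- w / c - l .. - w / c + l}"
      unfolding l_def by (rule affine_band_eq_interval[OF False])
    have centred: "{x. \<bar>c * x\<bar> \<le> z} = {- l .. l}"
      using affine_band_eq_interval[OF False, of 0 z] unfolding l_def by simp
    have "emeasure N01 {x. \<bar>c * x + w\<bar> \<le> z} \<le> emeasure N01 {x. \<bar>c * x\<bar> \<le> z}"
      unfolding shifted centred by (rule emeasure_N01_shifted_interval_le[OF \<open>l \<ge> 0\<close>])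
    then show ?thesis
      by (simp add: N.emeasure_eq_measure)
  qed
qed

section \<open>Centred Gaussian vectors\<close>

lemma abs_mult_le_sum_squares:
  fixes x y :: real
  shows "\<bar>x * y\<bar> \<le> x\<^sup>2 + y\<^sup>2"
proof -
  have "0 \<le> (\<bar>x\<bar> - \<bar>y\<bar>)\<^sup>2" by simp
  then have "2 * (\<bar>x\<bar> * \<bar>y\<bar>) \<le> x\<^sup>2 + y\<^sup>2"
    by (simp add: power2_eq_square algebra_simps)
  moreover have "0 \<le> \<bar>x\<bar> * \<bar>y\<bar>" by simp
  ultimately have "\<bar>x\<bar> * \<bar>y\<bar> \<le> x\<^sup>2 + y\<^sup>2" by linarith
  then show ?thesis by (simp add: abs_mult)
qed

locale gaussian_vector = prob_space M for M :: "'a measure" +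
  fixes n :: nat and X :: "nat \<Rightarrow> 'a \<Rightarrow> real"
  assumes gaussian: "centered_gaussian_vector M n X"
begin

definition cov :: "nat \<Rightarrow> nat \<Rightarrow> real" where
  "cov i j = (\<integral>\<omega>. X i \<omega> * X j \<omega> \<partial>M)"

lemma cov_sym: "cov i j = cov j i"
  unfolding cov_def by (simp add: mult.commute)

lemma cov_diag_nonneg: "cov i i \<ge> 0"
  unfolding cov_def by (rule integral_nonneg_AE) simp

lemma component_measurable [measurable]: "j < n \<Longrightarrow> X j \<in> borel_measurable M"
  using gaussian unfolding centered_gaussian_vector_def by auto

lemma linear_combination_gaussian: "centered_gaussian_rv M (\<lambda>\<omega>. \<Sum>i<n. c i * X i \<omega>)"
  using gaussian unfolding centered_gaussian_vector_def by auto

lemma component_gaussian: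
  assumes "j < n"
  shows "centered_gaussian_rv M (X j)"
proof -
  have "(\<Sum>i<n. (if i = j then 1 else 0) * X i \<omega>) = X j \<omega>" for \<omega>
    using sum_single_coordinate[OF assms, of 1 "\<lambda>i. X i \<omega>"] by simp
  then show ?thesis
    using linear_combination_gaussian[of "\<lambda>i. if i = j then 1 else 0"] by simp
qed

text \<open>Covariances exist, by \<open>\<bar>x y\<bar> \<le> x\<^sup>2 + y\<^sup>2\<close>.\<close>

lemma integrable_component_mult:
  assumes "i < n" "j < n"
  shows "integrable M (\<lambda>\<omega>. X i \<omega> * X j \<omega>)"
proof (rule Bochner_Integration.integrable_bound)
  show "integrable M (\<lambda>\<omega>. (X i \<omega>)\<^sup>2 + (X j \<omega>)\<^sup>2)"
    using assms by (intro Bochner_Integration.integrable_add centered_gaussian_rv_moments(1)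
        prob_space_axioms component_gaussian)
  show "AE \<omega> in M. norm (X i \<omega> * X j \<omega>) \<le> norm ((X i \<omega>)\<^sup>2 + (X j \<omega>)\<^sup>2)"
    by (rule AE_I2) (simp add: abs_mult_le_sum_squares)
qed (use assms in measurable)

lemma char_function:
  "(\<integral>\<omega>. iexp (\<Sum>j<n. t j * X j \<omega>) \<partial>M)
     = complex_of_real (exp (- (\<Sum>i<n. \<Sum>j<n. t i * t j * cov i j) / 2))"
proof -
  have "(\<Sum>j<n. t j * X j \<omega>)\<^sup>2 = (\<Sum>i<n. \<Sum>j<n. t i * t j * (X i \<omega> * X j \<omega>))" for \<omega>
    by (simp add: power2_eq_square sum_product algebra_simps)
  then have "(\<integral>\<omega>. (\<Sum>j<n. t j * X j \<omega>)\<^sup>2 \<partial>M)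
      = (\<integral>\<omega>. (\<Sum>i<n. \<Sum>j<n. t i * t j * (X i \<omega> * X j \<omega>)) \<partial>M)"
    by simp
  also have "\<dots> = (\<Sum>i<n. (\<integral>\<omega>. (\<Sum>j<n. t i * t j * (X i \<omega> * X j \<omega>)) \<partial>M))"
    by (rule Bochner_Integration.integral_sum)
      (auto intro!: Bochner_Integration.integrable_sum Bochner_Integration.integrable_mult_right integrable_component_mult)
  also have "\<dots> = (\<Sum>i<n. \<Sum>j<n. (\<integral>\<omega>. t i * t j * (X i \<omega> * X j \<omega>) \<partial>M))"
    by (intro sum.cong refl Bochner_Integration.integral_sum)
      (auto intro!: Bochner_Integration.integrable_mult_right integrable_component_mult)
  also have "\<dots> = (\<Sum>i<n. \<Sum>j<n. t i * t j * cov i j)"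
    by (simp add: cov_def)
  finally have "(\<integral>\<omega>. (\<Sum>j<n. t j * X j \<omega>)\<^sup>2 \<partial>M) = (\<Sum>i<n. \<Sum>j<n. t i * t j * cov i j)" .
  then show ?thesis
    using centered_gaussian_rv_moments(2)[OF prob_space_axioms linear_combination_gaussian[of t]]
    by simp
qed

end


section \<open>Decomposition of a diagonally dominated covariance\<close>

text \<open>If
  \<open>\<Sum>\<^sub>j\<^sub>\<noteq>\<^sub>i \<bar>C i j\<bar> \<le> r C i i\<close>, then
  \<open>C = (1 - r) diag C + \<Sum>\<^sub>(\<^sub>i\<^sub>,\<^sub>j\<^sub>) v\<^sub>i\<^sub>j v\<^sub>i\<^sub>j\<^sup>T\<close>, where \<open>v\<^sub>i\<^sub>i = sqrt (diag_slack i) e\<^sub>i\<close> and, for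
  \<open>i \<noteq> j\<close>, \<open>v\<^sub>i\<^sub>j = sqrt (\<bar>C i j\<bar> / 2) (e\<^sub>i + sgn (C i j) e\<^sub>j)\<close>.  This is stated for the quadratic
  forms \<open>t \<mapsto> t\<^sup>T C t\<close>; \<open>diag_slack i\<close> is the amount by which row \<open>i\<close> is dominated and
  \<open>factor_vec (i, j)\<close> is the vector \<open>v\<^sub>i\<^sub>j\<close>.\<close>

definition diag_slack :: "nat \<Rightarrow> (nat \<Rightarrow> nat \<Rightarrow> real) \<Rightarrow> real \<Rightarrow> nat \<Rightarrow> real" where
  "diag_slack n C r i = r * C i i - (\<Sum>j\<in>{..<n} - {i}. \<bar>C i j\<bar>)"

definition factor_vec :: "nat \<Rightarrow> (nat \<Rightarrow> nat \<Rightarrow> real) \<Rightarrow> real \<Rightarrow> nat \<times> nat \<Rightarrow> nat \<Rightarrow> real" where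
  "factor_vec n C r k m = (case k of (i, j) \<Rightarrow>
     if i = j then (if m = i then sqrt (diag_slack n C r i) else 0)
     else sqrt (\<bar>C i j\<bar> / 2) * (if m = i then 1 else if m = j then sgn (C i j) else 0))"

lemma factor_vec_inner:
  assumes "i < n" "j < n"
  shows "(\<Sum>m<n. t m * factor_vec n C r (i, j) m) =
    (if i = j then t i * sqrt (diag_slack n C r i) else sqrt (\<bar>C i j\<bar> / 2) * (t i + sgn (C i j) * t j))"
proof (cases "i = j")
  case True
  have "(\<Sum>m<n. t m * factor_vec n C r (i, j) m) = (\<Sum>m<n. if m = i then t i * sqrt (diag_slack n C r i) else 0)"
    using True by (intro sum.cong) (auto simp: factor_vec_def)
  then show ?thesis using True assms by simp
next
  case False
  have "(\<Sum>m<n. t m * factor_vec n C r (i, j) m) = (\<Sum>m<n. sqrt (\<bar>C i j\<bar> / 2)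
      * ((if m = i then t i else 0) + (if m = j then sgn (C i j) * t j else 0)))"
    using False by (intro sum.cong) (auto simp: factor_vec_def)
  also have "\<dots> = sqrt (\<bar>C i j\<bar> / 2)
      * ((\<Sum>m<n. if m = i then t i else 0) + (\<Sum>m<n. if m = j then sgn (C i j) * t j else 0))"
    by (simp add: sum_distrib_left[symmetric] sum.distrib)
  finally show ?thesis using False assms by simp
qed

lemma factor_vec_inner_sq:
  assumes "i < n" "j < n" "diag_slack n C r i \<ge> 0"
  shows "(\<Sum>m<n. t m * factor_vec n C r (i, j) m)\<^sup>2 =
    (if i = j then (t i)\<^sup>2 * diag_slack n C r i
     else \<bar>C i j\<bar> / 2 * (t i)\<^sup>2 + \<bar>C i j\<bar> / 2 * (t j)\<^sup>2 + C i j * t i * t j)"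
proof (cases "i = j")
  case True
  then show ?thesis using assms by (simp add: factor_vec_inner power_mult_distrib)
next
  case False
  let ?c = "C i j"
  have sgn_sq: "(sgn ?c)\<^sup>2 * \<bar>?c\<bar> = \<bar>?c\<bar>" by (cases "?c = 0") (auto simp: sgn_if)
  have "(\<Sum>m<n. t m * factor_vec n C r (i, j) m)\<^sup>2 = \<bar>?c\<bar> / 2 * (t i + sgn ?c * t j)\<^sup>2"
    using assms False by (simp add: factor_vec_inner power_mult_distrib)
  also have "\<dots> = \<bar>?c\<bar> / 2 * (t i)\<^sup>2 + (sgn ?c * \<bar>?c\<bar>) * t i * t j + ((sgn ?c)\<^sup>2 * \<bar>?c\<bar>) / 2 * (t j)\<^sup>2"
    by (simp add: power2_eq_square algebra_simps)
  also have "\<dots> = \<bar>?c\<bar> / 2 * (t i)\<^sup>2 + \<bar>?c\<bar> / 2 * (t j)\<^sup>2 + ?c * t i * t j"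
    unfolding sgn_mult_abs sgn_sq by simp
  finally show ?thesis using False by simp
qed

lemma sum_off_diagonal:
  fixes f :: "nat \<Rightarrow> real"
  assumes "i < n"
  shows "(\<Sum>j<n. if i = j then 0 else f j) = (\<Sum>j\<in>{..<n} - {i}. f j)"
proof -
  have "(\<Sum>j<n. if i = j then 0 else f j)
      = (if i = i then 0 else f i) + (\<Sum>j\<in>{..<n} - {i}. if i = j then 0 else f j)"
    by (rule sum.remove) (auto simp: assms)
  then show ?thesis by simp
qed

text \<open>\<open>t\<^sup>T C t = \<Sum>\<^sub>i\<^sub>,\<^sub>j \<langle>t, v\<^sub>i\<^sub>j\<rangle>\<^sup>2 + (1 - r) \<Sum>\<^sub>m C m m t\<^sub>m\<^sup>2\<close>: the off-diagonal
  entries are produced by the vectors \<open>v\<^sub>i\<^sub>j\<close>, \<open>i \<noteq> j\<close>, whose diagonal contributions are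
  completed to \<open>r C i i\<close> by the vectors \<open>v\<^sub>i\<^sub>i\<close>.\<close>

lemma quadratic_form_decomposition:
  fixes C :: "nat \<Rightarrow> nat \<Rightarrow> real" and t :: "nat \<Rightarrow> real"
  assumes sym: "\<And>i j. C i j = C j i" and slack: "\<And>i. i < n \<Longrightarrow> diag_slack n C r i \<ge> 0"
    and "r \<le> 1" and diag: "\<And>i. i < n \<Longrightarrow> C i i \<ge> 0"
  shows "(\<Sum>i<n. \<Sum>j<n. (\<Sum>m<n. t m * factor_vec n C r (i, j) m)\<^sup>2)
          + (\<Sum>m<n. (t m * sqrt ((1 - r) * C m m))\<^sup>2)
       = (\<Sum>i<n. \<Sum>j<n. t i * t j * C i j)"
proof -
  define off1 where "off1 = (\<Sum>i<n. \<Sum>j<n. if i = j then 0 else \<bar>C i j\<bar> / 2 * (t i)\<^sup>2)"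
  define off2 where "off2 = (\<Sum>i<n. \<Sum>j<n. if i = j then 0 else \<bar>C i j\<bar> / 2 * (t j)\<^sup>2)"
  define cross where "cross = (\<Sum>i<n. \<Sum>j<n. if i = j then 0 else C i j * t i * t j)"
  have "(\<Sum>i<n. \<Sum>j<n. (\<Sum>m<n. t m * factor_vec n C r (i, j) m)\<^sup>2)
      = (\<Sum>i<n. \<Sum>j<n. (if i = j then (t i)\<^sup>2 * diag_slack n C r i else 0)
          + (if i = j then 0 else \<bar>C i j\<bar> / 2 * (t i)\<^sup>2)
          + (if i = j then 0 else \<bar>C i j\<bar> / 2 * (t j)\<^sup>2) + (if i = j then 0 else C i j * t i * t j))"
    by (intro sum.cong refl) (simp add: factor_vec_inner_sq slack)
  also have "\<dots> = (\<Sum>i<n. (t i)\<^sup>2 * diag_slack n C r i) + off1 + off2 + cross"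
    unfolding off1_def off2_def cross_def by (simp add: sum.distrib)
  finally have rank_one_part: "(\<Sum>i<n. \<Sum>j<n. (\<Sum>m<n. t m * factor_vec n C r (i, j) m)\<^sup>2)
      = (\<Sum>i<n. (t i)\<^sup>2 * diag_slack n C r i) + off1 + off2 + cross" .
  have "off2 = (\<Sum>j<n. \<Sum>i<n. if i = j then 0 else \<bar>C i j\<bar> / 2 * (t j)\<^sup>2)"
    unfolding off2_def by (rule sum.swap)
  also have "\<dots> = off1"
    unfolding off1_def by (intro sum.cong refl) (auto simp: sym)
  finally have "off2 = off1" .
  then have "(\<Sum>i<n. (t i)\<^sup>2 * diag_slack n C r i) + off1 + off2
      = (\<Sum>i<n. (t i)\<^sup>2 * (diag_slack n C r i + (\<Sum>j<n. if i = j then 0 else \<bar>C i j\<bar>)))"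
    unfolding off1_def
    by (simp add: sum.distrib[symmetric] sum_distrib_left algebra_simps if_distrib cong: if_cong)
  also have "\<dots> = (\<Sum>i<n. (t i)\<^sup>2 * (r * C i i))"
    by (intro sum.cong refl) (simp add: sum_off_diagonal diag_slack_def)
  finally have diagonal_part: "(\<Sum>i<n. (t i)\<^sup>2 * diag_slack n C r i) + off1 + off2
      = (\<Sum>i<n. (t i)\<^sup>2 * (r * C i i))" .
  have scaled_diagonal: "(\<Sum>m<n. (t m * sqrt ((1 - r) * C m m))\<^sup>2) = (\<Sum>m<n. (t m)\<^sup>2 * ((1 - r) * C m m))"
    using \<open>r \<le> 1\<close> diag by (intro sum.cong refl) (simp add: power_mult_distrib)
  have "(\<Sum>i<n. \<Sum>j<n. t i * t j * C i j)
      = (\<Sum>i<n. \<Sum>j<n. (if i = j then (t i)\<^sup>2 * C i i else 0) + (if i = j then 0 else C i j * t i * t j))"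
    by (intro sum.cong refl) (auto simp: power2_eq_square)
  also have "\<dots> = (\<Sum>i<n. (t i)\<^sup>2 * C i i) + cross"
    unfolding cross_def by (simp add: sum.distrib)
  finally have full: "(\<Sum>i<n. \<Sum>j<n. t i * t j * C i j) = (\<Sum>i<n. (t i)\<^sup>2 * C i i) + cross" .
  have "(\<Sum>i<n. (t i)\<^sup>2 * (r * C i i)) + (\<Sum>m<n. (t m)\<^sup>2 * ((1 - r) * C m m)) = (\<Sum>i<n. (t i)\<^sup>2 * C i i)"
    by (simp add: sum.distrib[symmetric] algebra_simps)
  then show ?thesis
    using rank_one_part diagonal_part scaled_diagonal full by linarith
qed


section \<open>Products of standard normal distributions\<close>

lemma finite_product_N01:
  assumes "finite I"
  shows "finite_product_prob_space (\<lambda>_. N01) I"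
proof -
  have "product_prob_space (\<lambda>_. N01)"
    by (rule product_prob_spaceI) (rule prob_space_N01)
  then interpret product_prob_space "\<lambda>_. N01" I
    by (simp add: product_prob_space_def)
  show ?thesis by unfold_locales (rule assms)
qed

lemma prob_space_PiM_N01: "finite I \<Longrightarrow> prob_space (PiM I (\<lambda>_. N01))"
proof -
  assume "finite I"
  then interpret finite_product_prob_space "\<lambda>_. N01" I by (rule finite_product_N01)
  show ?thesis by (rule prob_space_axioms)
qed

lemma component_measurable_PiM_N01:
  assumes "k \<in> I"
  shows "(\<lambda>x. x k) \<in> borel_measurable (PiM I (\<lambda>_. N01))"
proof -
  have "(\<lambda>x. x k) \<in> measurable (PiM I (\<lambda>_. N01)) N01"
    by (rule measurable_component_singleton[OF assms])
  moreover have "measurable (PiM I (\<lambda>_. N01)) N01 = measurable (PiM I (\<lambda>_. N01)) borel"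
    by (rule measurable_cong_sets) auto
  ultimately show ?thesis by simp
qed

lemma char_PiM_N01:
  assumes "finite I"
  shows "(\<integral>g. iexp (\<Sum>i\<in>I. a i * g i) \<partial>PiM I (\<lambda>_. N01))
       = complex_of_real (exp (- (\<Sum>i\<in>I. (a i)\<^sup>2) / 2))"
proof -
  interpret finite_product_prob_space "\<lambda>_. N01" I by (rule finite_product_N01[OF assms])
  have "(\<integral>g. iexp (\<Sum>i\<in>I. a i * g i) \<partial>PiM I (\<lambda>_. N01))
      = (\<integral>g. (\<Prod>i\<in>I. iexp (a i * g i)) \<partial>PiM I (\<lambda>_. N01))"
    using assms by (simp add: exp_sum sum_distrib_left)
  also have "\<dots> = (\<Prod>i\<in>I. (\<integral>x. iexp (a i * x) \<partial>N01))"
  proof (rule product_integral_prod[OF assms, where f = "\<lambda>i x. iexp (a i * x)"])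
    fix i
    show "integrable N01 (\<lambda>x. iexp (a i * x))"
      by (rule prob_space.integrable_iexp[OF prob_space_N01]) auto
  qed
  also have "\<dots> = (\<Prod>i\<in>I. complex_of_real (exp (- (a i)\<^sup>2 / 2)))"
  proof (rule prod.cong[OF refl])
    fix i
    have "char N01 (a i) = complex_of_real (exp (- (a i)\<^sup>2 / 2))"
      by (simp only: char_std_normal_distribution)
    then show "(\<integral>x. iexp (a i * x) \<partial>N01) = complex_of_real (exp (- (a i)\<^sup>2 / 2))"
      unfolding char_def .
  qed
  also have "\<dots> = complex_of_real (exp (\<Sum>i\<in>I. - (a i)\<^sup>2 / 2))"
    by (simp only: of_real_prod[symmetric] exp_sum[OF assms])
  also have "(\<Sum>i\<in>I. - (a i)\<^sup>2 / 2) = - (\<Sum>i\<in>I. (a i)\<^sup>2) / 2"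
    by (simp add: sum_negf sum_divide_distrib)
  finally show ?thesis .
qed

lemma integral_pair_product:
  fixes f :: "'a \<Rightarrow> complex" and g :: "'b \<Rightarrow> complex"
  assumes "prob_space A" "prob_space B"
    and [measurable]: "f \<in> borel_measurable A" "g \<in> borel_measurable B"
    and "\<And>x. norm (f x) \<le> 1" "\<And>y. norm (g y) \<le> 1"
  shows "(\<integral>z. f (fst z) * g (snd z) \<partial>(A \<Otimes>\<^sub>M B)) = (\<integral>x. f x \<partial>A) * (\<integral>y. g y \<partial>B)"
proof -
  interpret A: prob_space A by fact
  interpret B: prob_space B by fact
  interpret AB: pair_prob_space A B ..
  have "integrable (A \<Otimes>\<^sub>M B) (\<lambda>z. f (fst z) * g (snd z))"
  proof (rule AB.P.integrable_const_bound[where B = 1])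
    show "AE z in A \<Otimes>\<^sub>M B. norm (f (fst z) * g (snd z)) \<le> 1"
      unfolding norm_mult using assms(5,6) by (intro AE_I2 mult_le_one) auto
  qed measurable
  then have "(\<integral>z. f (fst z) * g (snd z) \<partial>(A \<Otimes>\<^sub>M B))
      = (\<integral>x. (\<integral>y. f (fst (x, y)) * g (snd (x, y)) \<partial>B) \<partial>A)"
    by (rule AB.integral_fst'[symmetric])
  then show ?thesis by simp
qed

section \<open>The model vector\<close>

locale diag_dominated_gaussian = gaussian_vector +
  fixes r :: real
  assumes r_less_1: "r < 1"
    and dominated: "\<And>i. i < n \<Longrightarrow> (\<Sum>j\<in>{..<n} - {i}. \<bar>cov i j\<bar>) \<le> r * cov i i"
begin

text \<open>The model vector: on a product of standard Gaussian coordinates \<open>(h, g)\<close> put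
  \<open>U m = scale m * g m + shared m h\<close>.  The coordinates \<open>g m\<close> are private to \<open>U m\<close>, whereas
  \<open>shared m h = \<Sum>\<^sub>k factor_vec k m * h k\<close> realises the rank-one part of the covariance.  Beyond \<open>n\<close> the vector is set to \<open>0\<close>, so that
  all its coordinates are measurable.\<close>

definition pairs :: "(nat \<times> nat) set" where
  "pairs = {..<n} \<times> {..<n}"

definition shared_space :: "((nat \<times> nat) \<Rightarrow> real) measure" where
  "shared_space = PiM pairs (\<lambda>_. N01)"

definition private_space :: "(nat \<Rightarrow> real) measure" where
  "private_space = PiM {..<n} (\<lambda>_. N01)"

definition model :: "(((nat \<times> nat) \<Rightarrow> real) \<times> (nat \<Rightarrow> real)) measure" where
  "model = shared_space \<Otimes>\<^sub>M private_space"

definition scale :: "nat \<Rightarrow> real" where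
  "scale m = sqrt ((1 - r) * cov m m)"

definition shared :: "nat \<Rightarrow> ((nat \<times> nat) \<Rightarrow> real) \<Rightarrow> real" where
  "shared m h = (\<Sum>k\<in>pairs. factor_vec n cov r k m * h k)"

definition U :: "nat \<Rightarrow> ((nat \<times> nat) \<Rightarrow> real) \<times> (nat \<Rightarrow> real) \<Rightarrow> real" where
  "U m z = (if m < n then scale m * snd z m + shared m (fst z) else 0)"

lemma finite_pairs: "finite pairs"
  by (simp add: pairs_def)

text \<open>Diagonal dominance makes the vectors \<open>v\<^sub>i\<^sub>i\<close> real.\<close>

lemma diag_slack_nonneg: "i < n \<Longrightarrow> diag_slack n cov r i \<ge> 0"
  using dominated[of i] by (simp add: diag_slack_def)

lemma prob_space_shared: "prob_space shared_space"
  unfolding shared_space_def by (rule prob_space_PiM_N01[OF finite_pairs])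

lemma prob_space_private: "prob_space private_space"
  unfolding private_space_def by (rule prob_space_PiM_N01) simp

lemma pair_prob_space_model: "pair_prob_space shared_space private_space"
proof -
  interpret S: prob_space shared_space by (rule prob_space_shared)
  interpret T: prob_space private_space by (rule prob_space_private)
  show ?thesis ..
qed

lemma prob_space_model: "prob_space model"
proof -
  interpret pair_prob_space shared_space private_space by (rule pair_prob_space_model)
  show ?thesis unfolding model_def by (rule P.prob_space_axioms)
qed

lemma shared_measurable: "shared m \<in> borel_measurable shared_space"
  unfolding shared_def shared_space_def
  by (intro borel_measurable_sum borel_measurable_times borel_measurable_const
      component_measurable_PiM_N01)

lemma U_measurable [measurable]: "U m \<in> borel_measurable model"
proof (cases "m < n")
  case True
  have "(\<lambda>z. snd z m) \<in> borel_measurable model"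
    unfolding model_def private_space_def using True
    by (intro measurable_compose[OF measurable_snd component_measurable_PiM_N01]) auto
  moreover have "(\<lambda>z. shared m (fst z)) \<in> borel_measurable model"
    unfolding model_def by (rule measurable_compose[OF measurable_fst shared_measurable])
  ultimately show ?thesis
    unfolding U_def using True by simp
next
  case False
  then have "U m = (\<lambda>_. 0)" by (simp add: U_def fun_eq_iff)
  then show ?thesis by simp
qed

lemma linear_form_U:
  "(\<Sum>j<n. t j * U j z) = (\<Sum>k\<in>pairs. (\<Sum>m<n. t m * factor_vec n cov r k m) * fst z k)
     + (\<Sum>m<n. (t m * scale m) * snd z m)"
proof -
  have "(\<Sum>j<n. t j * U j z)
      = (\<Sum>m<n. (t m * scale m) * snd z m) + (\<Sum>j<n. \<Sum>k\<in>pairs. t j * factor_vec n cov r k j * fst z k)"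
    unfolding U_def shared_def by (simp add: algebra_simps sum_distrib_left sum.distrib)
  also have "(\<Sum>j<n. \<Sum>k\<in>pairs. t j * factor_vec n cov r k j * fst z k)
      = (\<Sum>k\<in>pairs. (\<Sum>m<n. t m * factor_vec n cov r k m) * fst z k)"
    by (subst sum.swap) (simp add: sum_distrib_right)
  finally show ?thesis by simp
qed

text \<open>The model vector has the same characteristic function as \<open>X\<close>, by the
  decomposition of the covariance.\<close>

lemma char_U:
  "(\<integral>z. iexp (\<Sum>j<n. t j * U j z) \<partial>model)
     = complex_of_real (exp (- (\<Sum>i<n. \<Sum>j<n. t i * t j * cov i j) / 2))"
proof -
  define a where "a k = (\<Sum>m<n. t m * factor_vec n cov r k m)" for k
  let ?f = "\<lambda>h. iexp (\<Sum>k\<in>pairs. a k * h k)"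
  let ?g = "\<lambda>g. iexp (\<Sum>m<n. (t m * scale m) * g m)"
  have f_meas: "?f \<in> borel_measurable shared_space"
    unfolding shared_space_def
    by (intro borel_measurable_continuous_on[where f = iexp] continuous_intros
        borel_measurable_of_real borel_measurable_sum borel_measurable_times
        borel_measurable_const component_measurable_PiM_N01) auto
  have g_meas: "?g \<in> borel_measurable private_space"
    unfolding private_space_def
    by (intro borel_measurable_continuous_on[where f = iexp] continuous_intros
        borel_measurable_of_real borel_measurable_sum borel_measurable_times
        borel_measurable_const component_measurable_PiM_N01) auto
  have "(\<integral>z. iexp (\<Sum>j<n. t j * U j z) \<partial>model) = (\<integral>z. ?f (fst z) * ?g (snd z) \<partial>model)"
    unfolding linear_form_U a_def by (simp add: exp_add distrib_left)
  also have "\<dots> = (\<integral>h. ?f h \<partial>shared_space) * (\<integral>g. ?g g \<partial>private_space)"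
    unfolding model_def
    by (rule integral_pair_product[OF prob_space_shared prob_space_private f_meas g_meas])
      (simp_all add: norm_exp_i_times)
  also have "\<dots> = complex_of_real (exp (- (\<Sum>k\<in>pairs. (a k)\<^sup>2) / 2))
      * complex_of_real (exp (- (\<Sum>m<n. (t m * scale m)\<^sup>2) / 2))"
    unfolding shared_space_def private_space_def
    by (simp only: char_PiM_N01[OF finite_pairs] char_PiM_N01[OF finite_lessThan])
  also have "\<dots> = complex_of_real (exp (- ((\<Sum>k\<in>pairs. (a k)\<^sup>2) + (\<Sum>m<n. (t m * scale m)\<^sup>2)) / 2))"
    by (simp only: of_real_mult[symmetric] exp_add[symmetric] add_divide_distrib minus_add_distrib)
  also have "(\<Sum>k\<in>pairs. (a k)\<^sup>2) + (\<Sum>m<n. (t m * scale m)\<^sup>2) = (\<Sum>i<n. \<Sum>j<n. t i * t j * cov i j)"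
  proof -
    have "(\<Sum>k\<in>pairs. (a k)\<^sup>2) = (\<Sum>i<n. \<Sum>j<n. (\<Sum>m<n. t m * factor_vec n cov r (i, j) m)\<^sup>2)"
      unfolding pairs_def a_def by (simp add: sum.cartesian_product)
    then show ?thesis
      unfolding scale_def
      using quadratic_form_decomposition[of cov n r t] cov_sym diag_slack_nonneg r_less_1 cov_diag_nonneg
      by simp
  qed
  finally show ?thesis .
qed

text \<open>Conditionally on the shared coordinates the components of the model vector are
  independent Gaussians with shifted means; by the one-dimensional Anderson inequality each
  shift only lowers the probability of a symmetric interval.\<close>

lemma box_prob_model_le:
  assumes "c \<ge> 0"
  shows "measure model {z \<in> space model. \<forall>m<n. \<bar>U m z\<bar> \<le> c}
       \<le> (\<Prod>m<n. measure N01 {x. \<bar>scale m * x\<bar> \<le> c})"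
proof -
  interpret S: prob_space shared_space by (rule prob_space_shared)
  interpret T: prob_space private_space by (rule prob_space_private)
  interpret F: finite_product_prob_space "\<lambda>_. N01" "{..<n}" by (rule finite_product_N01) simp
  define E where "E = {z \<in> space model. \<forall>m<n. \<bar>U m z\<bar> \<le> c}"
  define bound where "bound = (\<Prod>m<n. measure N01 {x. \<bar>scale m * x\<bar> \<le> c})"
  have "E \<in> sets (shared_space \<Otimes>\<^sub>M private_space)"
    unfolding E_def model_def[symmetric] by measurable
  have section_le: "emeasure private_space (Pair h -` E) \<le> ennreal bound" if "h \<in> space shared_space" for h
  proof -
    define A where "A m = {x. \<bar>scale m * x + shared m h\<bar> \<le> c}" for m
    have A_sets: "A m \<in> sets N01" for m
      unfolding A_def by measurable
    have "Pair h -` E = PiE {..<n} A"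
      using that
      by (auto simp: E_def A_def U_def model_def private_space_def space_pair_measure space_PiM PiE_def Pi_def)
    then have "emeasure private_space (Pair h -` E) = (\<Prod>m<n. emeasure N01 (A m))"
      unfolding private_space_def using A_sets by (simp add: F.measure_times)
    also have "\<dots> = ennreal (\<Prod>m<n. measure N01 (A m))"
      by (simp add: F.M.emeasure_eq_measure prod_ennreal)
    also have "\<dots> \<le> ennreal bound"
      unfolding bound_def A_def
      by (intro ennreal_leI prod_mono conjI measure_nonneg measure_N01_affine_band_le assms)
    finally show ?thesis .
  qed
  have "emeasure model E = (\<integral>\<^sup>+h. emeasure private_space (Pair h -` E) \<partial>shared_space)"
    unfolding model_def by (rule T.emeasure_pair_measure_alt) fact
  also have "\<dots> \<le> (\<integral>\<^sup>+h. ennreal bound \<partial>shared_space)"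
    by (rule nn_integral_mono) (rule section_le)
  also have "\<dots> = ennreal bound"
    by (simp add: S.emeasure_space_1)
  finally have "emeasure model E \<le> ennreal bound" .
  moreover have "bound \<ge> 0"
    unfolding bound_def by (simp add: prod_nonneg)
  ultimately have "measure model E \<le> bound"
    by (simp add: measure_def enn2real_leI)
  then show ?thesis
    by (simp add: E_def bound_def)
qed

lemma marginal_prob_eq:
  assumes "m < n"
  shows "measure N01 {x. \<bar>scale m * x\<bar> \<le> c * sqrt (1 - r)} = measure M {\<omega> \<in> space M. \<bar>X m \<omega>\<bar> \<le> c}"
proof -
  have [measurable]: "X m \<in> borel_measurable M" using assms by simp
  obtain \<sigma> where "\<sigma> \<ge> 0" and law: "distr M lborel (X m) = distr N01 lborel (\<lambda>x. \<sigma> * x)"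
    and variance: "(\<integral>\<omega>. (X m \<omega>)\<^sup>2 \<partial>M) = \<sigma>\<^sup>2"
    by (rule centered_gaussian_rv_law[OF prob_space_axioms component_gaussian[OF assms]])
  have "scale m = sqrt (1 - r) * \<sigma>"
    using variance \<open>\<sigma> \<ge> 0\<close> r_less_1 by (simp add: scale_def cov_def power2_eq_square real_sqrt_mult)
  then have "\<bar>scale m * x\<bar> \<le> c * sqrt (1 - r) \<longleftrightarrow> \<bar>\<sigma> * x\<bar> \<le> c" for x
    using r_less_1 by (simp add: abs_mult mult.commute mult.left_commute)
  then have "{x. \<bar>scale m * x\<bar> \<le> c * sqrt (1 - r)} = {x \<in> space N01. \<sigma> * x \<in> {y. \<bar>y\<bar> \<le> c}}"
    by auto
  also have "measure N01 \<dots> = measure M {\<omega> \<in> space M. X m \<omega> \<in> {y. \<bar>y\<bar> \<le> c}}"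
    by (rule measure_by_law[OF law, symmetric]) measurable
  finally show ?thesis by simp
qed

lemma equal_char_vectors_model:
  "equal_char_vectors M model n (\<lambda>j. if j < n then X j else (\<lambda>_. 0)) U"
proof (intro equal_char_vectors.intro equal_char_vectors_axioms.intro prob_space_axioms prob_space_model)
  show "(if j < n then X j else (\<lambda>_. 0)) \<in> borel_measurable M" for j
    by simp
  show "U j \<in> borel_measurable model" for j
    by simp
  fix t
  have "(\<Sum>j<n. t j * (if j < n then X j else (\<lambda>_. 0)) \<omega>) = (\<Sum>j<n. t j * X j \<omega>)" for \<omega>
    by (intro sum.cong) auto
  then have "(\<integral>\<omega>. iexp (\<Sum>j<n. t j * (if j < n then X j else (\<lambda>_. 0)) \<omega>) \<partial>M)
      = (\<integral>\<omega>. iexp (\<Sum>j<n. t j * X j \<omega>) \<partial>M)"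
    by (simp only:)
  also have "\<dots> = (\<integral>z. iexp (\<Sum>j<n. t j * U j z) \<partial>model)"
    by (simp only: char_function char_U)
  finally show "(\<integral>\<omega>. iexp (\<Sum>j<n. t j * (if j < n then X j else (\<lambda>_. 0)) \<omega>) \<partial>M)
      = (\<integral>z. iexp (\<Sum>j<n. t j * U j z) \<partial>model)" .
qed

text \<open>Hence the box probability of \<open>X\<close> is bounded by that of any strictly larger box for the
  model vector, which factorises into the marginal probabilities of \<open>X\<close> at the rescaled level.\<close>

lemma box_prob_le_prod:
  assumes "0 \<le> z" "z < c * sqrt (1 - r)"
  shows "prob {\<omega> \<in> space M. \<forall>j<n. \<bar>X j \<omega>\<bar> \<le> z} \<le> (\<Prod>j<n. prob {\<omega> \<in> space M. \<bar>X j \<omega>\<bar> \<le> c})"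
proof -
  have "prob {\<omega> \<in> space M. \<forall>j<n. \<bar>X j \<omega>\<bar> \<le> z}
      = prob {\<omega> \<in> space M. \<forall>j<n. \<bar>(if j < n then X j else (\<lambda>_. 0)) \<omega>\<bar> \<le> z}"
    by (intro arg_cong[where f = prob]) auto
  also have "\<dots> \<le> measure model {y \<in> space model. \<forall>j<n. \<bar>U j y\<bar> \<le> c * sqrt (1 - r)}"
    using assms by (rule equal_char_vectors.box_prob_le[OF equal_char_vectors_model])
  also have "\<dots> \<le> (\<Prod>j<n. measure N01 {x. \<bar>scale j * x\<bar> \<le> c * sqrt (1 - r)})"
    using assms by (intro box_prob_model_le) linarith
  also have "\<dots> = (\<Prod>j<n. prob {\<omega> \<in> space M. \<bar>X j \<omega>\<bar> \<le> c})"
    by (intro prod.cong refl marginal_prob_eq) simp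
  finally show ?thesis .
qed

end

theorem mainTheorem16:
  fixes M :: "'a measure" and n :: nat and X :: "nat \<Rightarrow> 'a \<Rightarrow> real" and r z :: real
  assumes "prob_space M"
    and "centered_gaussian_vector M n X"
    and "r < 1"
    and "\<And>i. i < n \<Longrightarrow>
          (\<Sum>j\<in>{..<n} - {i}. \<bar>integral\<^sup>L M (\<lambda>\<omega>. X i \<omega> * X j \<omega>)\<bar>)
            \<le> r * integral\<^sup>L M (\<lambda>\<omega>. (X i \<omega>)\<^sup>2)"
    and "z > 0"
  shows "measure M {\<omega> \<in> space M. \<forall>j<n. \<bar>X j \<omega>\<bar> \<le> z}
           \<le> (\<Prod>j<n. measure M {\<omega> \<in> space M. \<bar>X j \<omega>\<bar> \<le> z / sqrt (1 - r)})"
proof -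
  have "gaussian_vector M n X"
    using assms(1,2) by (simp add: gaussian_vector_def gaussian_vector_axioms_def)
  then interpret gaussian_vector M n X .
  interpret diag_dominated_gaussian M n X r
  proof (intro diag_dominated_gaussian.intro diag_dominated_gaussian_axioms.intro)
    show "gaussian_vector M n X" by fact
    show "r < 1" by fact
    show "(\<Sum>j\<in>{..<n} - {i}. \<bar>cov i j\<bar>) \<le> r * cov i i" if "i < n" for i
      using assms(4)[OF that] by (simp add: cov_def power2_eq_square)
  qed
  let ?c = "z / sqrt (1 - r)"
  have "sqrt (1 - r) > 0" using assms(3) by simp
  have bound: "prob {\<omega> \<in> space M. \<forall>j<n. \<bar>X j \<omega>\<bar> \<le> z}
      \<le> (\<Prod>j<n. prob {\<omega> \<in> space M. \<bar>X j \<omega>\<bar> \<le> ?c + 1 / Suc k})" for k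
    using \<open>sqrt (1 - r) > 0\<close> assms(5)
    by (intro box_prob_le_prod) (simp_all add: distrib_right)
  have limit: "(\<lambda>k. \<Prod>j<n. prob {\<omega> \<in> space M. \<bar>X j \<omega>\<bar> \<le> ?c + 1 / Suc k})
      \<longlonglongrightarrow> (\<Prod>j<n. prob {\<omega> \<in> space M. \<bar>X j \<omega>\<bar> \<le> ?c})"
    by (intro tendsto_prod prob_abs_le_right_continuous) simp
  show ?thesis
    by (rule LIMSEQ_le_const[OF limit]) (use bound in auto)
qed

end
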